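(* Let $\mathcal{L}$ be a finite set and $G\in\mathbb{R}_{\ge0}^{\mathcal{L}\times\mathcal{L}}$ a nonnegative matrix whose associated directed graph is strongly connected. Let $\eta>0$ and $D=\eta I$. Let $\beta,\beta^{\textsc{int}}:\mathbb{Z}_{\ge 0}\to(0,\infty)$ be bounded with limits $\beta_\infty$ and $\beta^{\textsc{int}}_\infty$ at infinity, and $\delta>0$. Consider the continuous-time Markov chain $\mathbf{X}(t)$ on $\mathbb{Z}_{\ge0}^{\mathcal{L}}$ in which, with $X(t)=\mathbf{1}^\top\mathbf{X}(t)$, for each $u$: $\mathbf{X}\to\mathbf{X}+\mathbf{e}_u$ at rate $\big[(\beta(X(t))G+\beta^{\textsc{int}}(X(t))D)\mathbf{X}(t)\big]_u$ and $\mathbf{X}\to\mathbf{X}-\mathbf{e}_u$ at rate $\delta[\mathbf{X}(t)]_u$. Let $T_{\mathbf{X}}$ be the hitting time of $\mathbf{0}$ from $\mathbf{X}$ and $\rho(G)$ the spectral radius of $G$. Then: (i) If $\beta_\infty\rho(G)+\beta^{\textsc{int}}_\infty\eta<\delta$, there is a constant $C>0$ with $\mathbb{E}[T_{\mathbf{X}}]\le C\ln n$ for every state $\mathbf{X}$ with $\mathbf{1}^\top\mathbf{X}=n\ge2$. (ii) If $\beta_\infty\rho(G)+\beta^{\textsc{int}}_\infty\eta>\delta$, then $\mathbb{E}[T_{\mathbf{X}}]=\infty$ for every state $\mathbf{X}\neq\mathbf{0}$.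
   Context: $\mathbf{e}_u$ is the standard basis vector at $u$, $[\cdot]_u$ the $u$th coordinate, $\mathbf{1}$ the all-ones vector, $I$ the identity matrix. *)

theory Defs
  imports "HOL-Analysis.Analysis"
begin

definition spec_rad :: "('l::finite \<Rightarrow> 'l \<Rightarrow> real) \<Rightarrow> real" where
  "spec_rad G = Max {cmod c | c. \<exists>v::'l \<Rightarrow> complex. (\<exists>w. v w \<noteq> 0) \<and>
      (\<forall>u. (\<Sum>w\<in>UNIV. complex_of_real (G u w) * v w) = c * v u)}"

definition strongly_connected :: "('l \<Rightarrow> 'l \<Rightarrow> real) \<Rightarrow> bool" where
  "strongly_connected G \<longleftrightarrow> (\<forall>u v. (u, v) \<in> {(a, b). G a b > 0}\<^sup>*)"

definition tot :: "('l::finite \<Rightarrow> nat) \<Rightarrow> nat" where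
  "tot x = (\<Sum>u\<in>UNIV. x u)"

definition birth_rate ::
  "(nat \<Rightarrow> real) \<Rightarrow> (nat \<Rightarrow> real) \<Rightarrow> ('l::finite \<Rightarrow> 'l \<Rightarrow> real) \<Rightarrow> real
    \<Rightarrow> ('l \<Rightarrow> nat) \<Rightarrow> 'l \<Rightarrow> real" where
  "birth_rate \<beta> \<beta>i G \<eta> x u =
     \<beta> (tot x) * (\<Sum>w\<in>UNIV. G u w * real (x w)) + \<beta>i (tot x) * \<eta> * real (x u)"

definition death_rate :: "real \<Rightarrow> ('l \<Rightarrow> nat) \<Rightarrow> 'l \<Rightarrow> real" where
  "death_rate \<delta> x u = \<delta> * real (x u)"

definition total_rate ::
  "(nat \<Rightarrow> real) \<Rightarrow> (nat \<Rightarrow> real) \<Rightarrow> ('l::finite \<Rightarrow> 'l \<Rightarrow> real) \<Rightarrow> real \<Rightarrow> real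
    \<Rightarrow> ('l \<Rightarrow> nat) \<Rightarrow> real" where
  "total_rate \<beta> \<beta>i G \<eta> \<delta> x = (\<Sum>u\<in>UNIV. birth_rate \<beta> \<beta>i G \<eta> x u + death_rate \<delta> x u)"

text \<open>One step of the embedded jump chain, killed at the state 0: maps the distribution
m of the (sub-probability) jump chain at step k to that at step k+1. The predecessors
of y are y - e_u (birth at u; only if y u > 0 and y - e_u is not the absorbing state 0)
and y + e_u (death at u).\<close>
definition jump_step ::
  "(nat \<Rightarrow> real) \<Rightarrow> (nat \<Rightarrow> real) \<Rightarrow> ('l::finite \<Rightarrow> 'l \<Rightarrow> real) \<Rightarrow> real \<Rightarrow> real
    \<Rightarrow> (('l \<Rightarrow> nat) \<Rightarrow> ennreal) \<Rightarrow> (('l \<Rightarrow> nat) \<Rightarrow> ennreal)" where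
  "jump_step \<beta> \<beta>i G \<eta> \<delta> m = (\<lambda>y. \<Sum>u\<in>UNIV.
      (if 0 < y u \<and> y(u := y u - 1) \<noteq> (\<lambda>_. 0)
       then m (y(u := y u - 1)) * ennreal (birth_rate \<beta> \<beta>i G \<eta> (y(u := y u - 1)) u
                                  / total_rate \<beta> \<beta>i G \<eta> \<delta> (y(u := y u - 1)))
       else 0)
      + m (y(u := y u + 1)) * ennreal (death_rate \<delta> (y(u := y u + 1)) u
                                  / total_rate \<beta> \<beta>i G \<eta> \<delta> (y(u := y u + 1))))"

text \<open>P(jump chain started at x0 is at y after k jumps without having visited 0 before).\<close>
definition hit_mass ::
  "(nat \<Rightarrow> real) \<Rightarrow> (nat \<Rightarrow> real) \<Rightarrow> ('l::finite \<Rightarrow> 'l \<Rightarrow> real) \<Rightarrow> real \<Rightarrow> real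
    \<Rightarrow> ('l \<Rightarrow> nat) \<Rightarrow> nat \<Rightarrow> ('l \<Rightarrow> nat) \<Rightarrow> ennreal" where
  "hit_mass \<beta> \<beta>i G \<eta> \<delta> x0 k = (jump_step \<beta> \<beta>i G \<eta> \<delta> ^^ k) (\<lambda>y. if y = x0 then 1 else 0)"

text \<open>Expected hitting time E[T_X] of 0 from x0 for the CTMC: the sum over jumps k
before absorption of the expected holding time 1/q(Y_k) in the current state Y_k of
the jump chain (value in [0, \<infinity>]).\<close>
definition exp_hit_time ::
  "(nat \<Rightarrow> real) \<Rightarrow> (nat \<Rightarrow> real) \<Rightarrow> ('l::finite \<Rightarrow> 'l \<Rightarrow> real) \<Rightarrow> real \<Rightarrow> real
    \<Rightarrow> ('l \<Rightarrow> nat) \<Rightarrow> ennreal" where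
  "exp_hit_time \<beta> \<beta>i G \<eta> \<delta> x0 =
     (\<Sum>k. \<integral>\<^sup>+ y. (if y = (\<lambda>_. 0) then 0
                  else hit_mass \<beta> \<beta>i G \<eta> \<delta> x0 k y / ennreal (total_rate \<beta> \<beta>i G \<eta> \<delta> y))
             \<partial>count_space UNIV)"

end

theory Submission
  imports Defs "Jordan_Normal_Form.Spectral_Radius"
begin

text \<open>
  Take a positive row vector w with w G \<le> r w for some r slightly above \<rho>(G), or, using strong
  connectivity, w G \<ge> r w for some r slightly below \<rho>(G); both come from truncated Neumann
  series 1^T (\<Sum>k<N. (G/s)^k). The weighted size W = w \<cdot> X then grows by births at rate about
  (\<beta>_\<infinity> r + \<beta>i_\<infinity> \<eta>) W and shrinks by deaths at rate \<delta> W, as in a one-dimensional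
  birth-death process.

  Subcritical case: V = c ln (W + 1) + A (1 - exp (-\<kappa> W)) has generator at most -1 off the
  absorbing state, and summing this along the embedded jump chain gives E[T_X] \<le> V(X) = O(ln n).

  Supercritical case: U = max 0 (exp (-\<kappa> c) - exp (-\<kappa> W)) is bounded and subharmonic, so the
  mean of U under the killed jump chain never decreases. The total jump rate after k jumps is
  O(n + k), so the expected holding times dominate a harmonic series and E[T_X] = \<infinity>.
\<close>

section \<open>Powers and spectral radius of a nonnegative matrix\<close>

primrec matpow :: "('l::finite \<Rightarrow> 'l \<Rightarrow> real) \<Rightarrow> nat \<Rightarrow> 'l \<Rightarrow> 'l \<Rightarrow> real" where
  "matpow G 0 = (\<lambda>u v. if u = v then 1 else 0)"
| "matpow G (Suc k) = (\<lambda>u v. \<Sum>w\<in>UNIV. matpow G k u w * G w v)"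

lemma matpow_nonneg: "(\<And>u v. 0 \<le> G u v) \<Longrightarrow> 0 \<le> matpow G k u v"
  by (induction k arbitrary: u v) (auto intro!: sum_nonneg)

lemma matpow_add: "matpow G (k + m) u v = (\<Sum>w\<in>UNIV. matpow G k u w * matpow G m w v)"
proof (induction m arbitrary: v)
  case 0
  then show ?case by (simp add: if_distrib cong: if_cong)
next
  case (Suc m)
  have "matpow G (k + Suc m) u v = (\<Sum>w'\<in>UNIV. \<Sum>w\<in>UNIV. matpow G k u w * matpow G m w w' * G w' v)"
    using Suc by (simp add: sum_distrib_right)
  also have "\<dots> = (\<Sum>w\<in>UNIV. matpow G k u w * matpow G (Suc m) w v)"
    by (subst sum.swap) (simp add: sum_distrib_left mult.assoc)
  finally show ?case .
qed

lemma matpow_divide: "matpow (\<lambda>u v. G u v / s) k u v = matpow G k u v / s ^ k"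
  by (induction k arbitrary: v) (simp_all add: sum_divide_distrib mult.commute)

lemma col_sum_matpow_Suc:
  "(\<Sum>u\<in>UNIV. (\<Sum>u'\<in>UNIV. matpow G k u' u) * G u v) = (\<Sum>u'\<in>UNIV. matpow G (Suc k) u' v)"
  by (simp add: sum_distrib_right) (rule sum.swap)

definition is_eigenvalue :: "('l::finite \<Rightarrow> 'l \<Rightarrow> real) \<Rightarrow> complex \<Rightarrow> bool" where
  "is_eigenvalue G c \<longleftrightarrow> (\<exists>\<phi>::'l \<Rightarrow> complex. (\<exists>w. \<phi> w \<noteq> 0) \<and>
      (\<forall>u. (\<Sum>w\<in>UNIV. complex_of_real (G u w) * \<phi> w) = c * \<phi> u))"

lemma spec_rad_eq_Max: "spec_rad G = Max {cmod c | c. is_eigenvalue G c}"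
  by (simp add: spec_rad_def is_eigenvalue_def)

lemma matpow_eigenvector:
  assumes "\<forall>u. (\<Sum>w\<in>UNIV. complex_of_real (G u w) * \<phi> w) = c * \<phi> u"
  shows "(\<Sum>w\<in>UNIV. complex_of_real (matpow G k u w) * \<phi> w) = c ^ k * \<phi> u"
proof (induction k arbitrary: u)
  case 0
  then show ?case by (simp add: if_distrib if_distribR cong: if_cong)
next
  case (Suc k)
  have "(\<Sum>w\<in>UNIV. complex_of_real (matpow G (Suc k) u w) * \<phi> w)
      = (\<Sum>w'\<in>UNIV. complex_of_real (matpow G k u w') * (\<Sum>w\<in>UNIV. complex_of_real (G w' w) * \<phi> w))"
    by (simp add: sum_distrib_left sum_distrib_right mult.assoc) (rule sum.swap)
  also have "\<dots> = c * (\<Sum>w'\<in>UNIV. complex_of_real (matpow G k u w') * \<phi> w')"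
    using assms by (simp add: sum_distrib_left algebra_simps)
  finally show ?case using Suc by simp
qed

lemma is_eigenvalue_divide:
  assumes "s \<noteq> 0"
  shows "is_eigenvalue (\<lambda>u v. G u v / s) c \<longleftrightarrow> is_eigenvalue G (complex_of_real s * c)"
proof -
  have "(\<Sum>w\<in>UNIV. complex_of_real (G u w / s) * \<phi> w) = c * \<phi> u \<longleftrightarrow>
        (\<Sum>w\<in>UNIV. complex_of_real (G u w) * \<phi> w) = complex_of_real s * c * \<phi> u" for u \<phi>
    using assms by (simp add: sum_divide_distrib[symmetric] field_simps)
  then show ?thesis unfolding is_eigenvalue_def by simp
qed

definition cmat :: "(nat \<Rightarrow> 'l) \<Rightarrow> ('l::finite \<Rightarrow> 'l \<Rightarrow> real) \<Rightarrow> complex mat" where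
  "cmat f G = mat CARD('l) CARD('l) (\<lambda>(i, j). complex_of_real (G (f i) (f j)))"

lemma cmat_carrier: "cmat f G \<in> carrier_mat CARD('l) CARD('l)" for G :: "'l::finite \<Rightarrow> 'l \<Rightarrow> real"
  by (simp add: cmat_def)

definition enum_index :: "(nat \<Rightarrow> 'l) \<Rightarrow> 'l::finite \<Rightarrow> nat" where
  "enum_index f = the_inv_into {0..<CARD('l)} f"

context
  fixes f :: "nat \<Rightarrow> 'l::finite"
  assumes f: "bij_betw f {0..<CARD('l)} UNIV"
begin

lemma enum_index: "enum_index f u < CARD('l)" "f (enum_index f u) = u"
  using f bij_betw_the_inv_into[OF f] unfolding enum_index_def
  by (auto simp: f_the_inv_into_f_bij_betw dest: bij_betwE)

lemma enum_index_apply: "l < CARD('l) \<Longrightarrow> enum_index f (f l) = l"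
  using f unfolding enum_index_def by (simp add: bij_betw_def the_inv_into_f_f)

lemma sum_reindex_enum: "(\<Sum>l<CARD('l). h (f l)) = (\<Sum>w\<in>UNIV. h w)"
  using sum.reindex_bij_betw[OF f, of h] by (simp add: atLeast0LessThan)

lemma cmat_pow:
  assumes "i < CARD('l)" "j < CARD('l)"
  shows "(cmat f G ^\<^sub>m k) $$ (i, j) = complex_of_real (matpow G k (f i) (f j))"
  using assms(2)
proof (induction k arbitrary: j)
  case 0
  have "f i = f j \<longleftrightarrow> i = j" using f assms(1) 0 by (auto simp: bij_betw_def inj_on_def)
  then show ?case using assms(1) 0 cmat_carrier[of f G] by simp
next
  case (Suc k)
  have "(cmat f G ^\<^sub>m Suc k) $$ (i, j)
      = (\<Sum>l<CARD('l). complex_of_real (matpow G k (f i) (f l) * G (f l) (f j)))"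
    using Suc assms(1) cmat_carrier[of f G]
    by (auto simp: scalar_prod_def cmat_def atLeast0LessThan intro!: sum.cong)
  also have "\<dots> = complex_of_real (matpow G (Suc k) (f i) (f j))"
    using sum_reindex_enum[of "\<lambda>w. complex_of_real (matpow G k (f i) w * G w (f j))"] by simp
  finally show ?case .
qed

lemma cmat_mult_vec:
  assumes "v \<in> carrier_vec CARD('l)"
  shows "(cmat f G *\<^sub>v v) $ enum_index f u
       = (\<Sum>w\<in>UNIV. complex_of_real (G u w) * v $ enum_index f w)"
proof -
  have "(cmat f G *\<^sub>v v) $ enum_index f u = (\<Sum>l<CARD('l). complex_of_real (G u (f l)) * v $ l)"
    using assms enum_index by (simp add: cmat_def scalar_prod_def atLeast0LessThan)
  also have "\<dots> = (\<Sum>l<CARD('l). complex_of_real (G u (f l)) * v $ enum_index f (f l))"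
    using enum_index_apply by (intro sum.cong) auto
  also have "\<dots> = (\<Sum>w\<in>UNIV. complex_of_real (G u w) * v $ enum_index f w)"
    by (rule sum_reindex_enum)
  finally show ?thesis .
qed

lemma is_eigenvalue_if_eigenvalue_cmat:
  assumes "eigenvalue (cmat f G) c"
  shows "is_eigenvalue G c"
proof -
  obtain v where v: "v \<in> carrier_vec CARD('l)" "v \<noteq> 0\<^sub>v CARD('l)"
    and eig: "cmat f G *\<^sub>v v = c \<cdot>\<^sub>v v"
    using assms cmat_carrier[of f G] unfolding eigenvalue_def eigenvector_def by auto
  from v obtain l where "l < CARD('l)" "v $ l \<noteq> 0"
    by (metis carrier_vecD eq_vecI index_zero_vec(1) index_zero_vec(2))
  then have "v $ enum_index f (f l) \<noteq> 0" using enum_index_apply by simp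
  moreover have "(\<Sum>w\<in>UNIV. complex_of_real (G u w) * v $ enum_index f w) = c * v $ enum_index f u" for u
    using cmat_mult_vec[OF v(1), of G u] eig enum_index(1)[of u] v(1) by simp
  ultimately show ?thesis
    unfolding is_eigenvalue_def by (intro exI[of _ "\<lambda>u. v $ enum_index f u"]) blast
qed

lemma eigenvalue_cmat_if_is_eigenvalue:
  assumes "is_eigenvalue G c"
  shows "eigenvalue (cmat f G) c"
proof -
  obtain \<phi> :: "'l \<Rightarrow> complex" and w where "\<phi> w \<noteq> 0"
    and \<phi>: "\<And>u. (\<Sum>w\<in>UNIV. complex_of_real (G u w) * \<phi> w) = c * \<phi> u"
    using assms unfolding is_eigenvalue_def by blast
  define v where "v = vec CARD('l) (\<lambda>l. \<phi> (f l))"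
  have v: "v \<in> carrier_vec CARD('l)" and v_index: "v $ enum_index f u = \<phi> u" for u
    using enum_index by (simp_all add: v_def)
  have "v \<noteq> 0\<^sub>v CARD('l)"
    using \<open>\<phi> w \<noteq> 0\<close> v_index[of w] enum_index(1)[of w] by auto
  moreover have "cmat f G *\<^sub>v v = c \<cdot>\<^sub>v v"
  proof (rule eq_vecI)
    fix i assume "i < dim_vec (c \<cdot>\<^sub>v v)"
    then have "i < CARD('l)" using v by simp
    then show "(cmat f G *\<^sub>v v) $ i = (c \<cdot>\<^sub>v v) $ i"
      using cmat_mult_vec[OF v, of G "f i"] \<phi> v_index enum_index_apply by (simp add: v_def)
  qed (use v cmat_carrier[of f G] in simp)
  ultimately show ?thesis
    unfolding eigenvalue_def eigenvector_def using v cmat_carrier[of f G] by auto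
qed

lemma eigenvalue_cmat_iff: "eigenvalue (cmat f G) c \<longleftrightarrow> is_eigenvalue G c"
  using is_eigenvalue_if_eigenvalue_cmat eigenvalue_cmat_if_is_eigenvalue by blast

end

lemma enumeration_finite: "\<exists>f :: nat \<Rightarrow> 'l::finite. bij_betw f {0..<CARD('l)} UNIV"
  using ex_bij_betw_nat_finite[of "UNIV :: 'l set"] by simp

lemma eigenvalue_norms_finite_nonempty:
  fixes G :: "'l::finite \<Rightarrow> 'l \<Rightarrow> real"
  shows "finite {cmod c | c. is_eigenvalue G c}" "{cmod c | c. is_eigenvalue G c} \<noteq> {}"
proof -
  obtain f :: "nat \<Rightarrow> 'l" where f: "bij_betw f {0..<CARD('l)} UNIV"
    using enumeration_finite by blast
  have "{cmod c | c. is_eigenvalue G c} = norm ` spectrum (cmat f G)"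
    using eigenvalue_cmat_iff[OF f] by (auto simp: spectrum_def)
  then show "finite {cmod c | c. is_eigenvalue G c}" "{cmod c | c. is_eigenvalue G c} \<noteq> {}"
    using card_finite_spectrum(1)[OF cmat_carrier[of f G]] spectrum_non_empty[OF cmat_carrier[of f G]]
    by simp_all
qed

lemma norm_le_spec_rad: "is_eigenvalue G c \<Longrightarrow> cmod c \<le> spec_rad G"
  unfolding spec_rad_eq_Max using eigenvalue_norms_finite_nonempty by (intro Max_ge) auto

lemma spec_rad_attained: "\<exists>c. is_eigenvalue G c \<and> cmod c = spec_rad G"
  using Max_in[OF eigenvalue_norms_finite_nonempty, of G] unfolding spec_rad_eq_Max by auto

lemma spec_rad_nonneg: "0 \<le> spec_rad G"
  using spec_rad_attained[of G] by (metis norm_ge_zero)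

lemma matpow_le_spec_rad_pow:
  fixes G :: "'l::finite \<Rightarrow> 'l \<Rightarrow> real"
  assumes "spec_rad G < s"
  obtains C where "\<And>k u v. \<bar>matpow G k u v\<bar> \<le> C * s ^ k"
proof -
  have s: "s > 0" using assms spec_rad_nonneg[of G] by linarith
  obtain f :: "nat \<Rightarrow> 'l" where f: "bij_betw f {0..<CARD('l)} UNIV"
    using enumeration_finite by blast
  define A where "A = cmat f (\<lambda>u v. G u v / s)"
  have "cmod c < 1" if "c \<in> spectrum A" for c
  proof -
    have "is_eigenvalue G (complex_of_real s * c)"
      using that s eigenvalue_cmat_iff[OF f] is_eigenvalue_divide[of s G]
      by (simp add: A_def spectrum_def)
    then have "cmod (complex_of_real s * c) \<le> spec_rad G"
      by (rule norm_le_spec_rad)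
    then have "s * cmod c \<le> spec_rad G"
      using s by (simp add: norm_mult)
    then have "s * cmod c < s * 1" using assms by simp
    then show ?thesis using s by (simp only: mult_less_cancel_left_pos)
  qed
  then have "spectral_radius A < 1"
    using spectral_radius_mem_max(1)[OF cmat_carrier[of f "\<lambda>u v. G u v / s"]]
    unfolding A_def by auto
  then obtain C where C: "\<And>k. norm_bound (A ^\<^sub>m k) C"
    using spectral_radius_jnf_norm_bound_less_1_upper_triangular[OF cmat_carrier] A_def by blast
  have "\<bar>matpow G k u v\<bar> \<le> C * s ^ k" for k u v
  proof -
    have "u \<in> f ` {0..<CARD('l)}" "v \<in> f ` {0..<CARD('l)}"
      using f by (simp_all add: bij_betw_imp_surj_on)
    then obtain i j where ij: "i < CARD('l)" "j < CARD('l)" "f i = u" "f j = v"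
      by auto
    then have "norm ((A ^\<^sub>m k) $$ (i, j)) \<le> C"
      using C[of k] cmat_carrier[of f "\<lambda>u v. G u v / s"] unfolding A_def norm_bound_def by auto
    then have "norm (complex_of_real (matpow G k u v / s ^ k)) \<le> C"
      using cmat_pow[OF f ij(1,2), of "\<lambda>u v. G u v / s" k] ij by (simp only: A_def matpow_divide)
    then have "\<bar>matpow G k u v / s ^ k\<bar> \<le> C"
      by (simp only: norm_of_real)
    then show ?thesis using s by (simp add: abs_divide pos_divide_le_eq)
  qed
  then show thesis by (rule that)
qed

section \<open>Positive sub- and superinvariant weights\<close>

definition neumann_weight :: "('l::finite \<Rightarrow> 'l \<Rightarrow> real) \<Rightarrow> real \<Rightarrow> nat \<Rightarrow> 'l \<Rightarrow> real" where
  "neumann_weight G s N v = (\<Sum>k<N. (\<Sum>u\<in>UNIV. matpow G k u v) / s ^ k)"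

text \<open>
  This identity drives both constructions: w = 1^T (\<Sum>k<N. (G/s)^k) is subinvariant once the tail
  1^T (G/s)^N is at most 1 (possible when s > \<rho>(G)), and superinvariant for r < s once
  w \<ge> s / (s - r) (possible when s < \<rho>(G) and G is irreducible).
\<close>

lemma neumann_weight_mult:
  assumes "s \<noteq> 0"
  shows "(\<Sum>u\<in>UNIV. neumann_weight G s N u * G u v)
       = s * (neumann_weight G s N v + (\<Sum>u\<in>UNIV. matpow G N u v) / s ^ N - 1)"
proof -
  define c where "c k = (\<Sum>u\<in>UNIV. matpow G k u v) / s ^ k" for k
  have "(\<Sum>u\<in>UNIV. neumann_weight G s N u * G u v)
      = (\<Sum>k<N. (\<Sum>u\<in>UNIV. (\<Sum>u'\<in>UNIV. matpow G k u' u) * G u v) / s ^ k)"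
    unfolding neumann_weight_def
    by (simp add: sum_distrib_right sum_divide_distrib) (rule sum.swap)
  also have "\<dots> = (\<Sum>k<N. (\<Sum>u\<in>UNIV. matpow G (Suc k) u v) / s ^ k)"
    by (simp only: col_sum_matpow_Suc)
  also have "\<dots> = s * (\<Sum>k<N. c (Suc k))"
    unfolding sum_distrib_left c_def
    by (intro sum.cong refl) (use assms in \<open>simp del: matpow.simps\<close>)
  also have "(\<Sum>k<N. c (Suc k)) = neumann_weight G s N v + c N - c 0"
    unfolding neumann_weight_def c_def[symmetric]
    using sum.lessThan_Suc_shift[of c N] by simp
  finally show ?thesis by (simp add: c_def)
qed

lemma neumann_weight_ge_1:
  assumes "\<And>u v. 0 \<le> G u v" "0 < s" "0 < N"
  shows "1 \<le> neumann_weight G s N v"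
proof -
  have "(\<Sum>u\<in>UNIV. matpow G 0 u v) / s ^ 0 \<le> neumann_weight G s N v"
    unfolding neumann_weight_def using assms matpow_nonneg[of G]
    by (intro member_le_sum) (auto intro!: sum_nonneg divide_nonneg_pos)
  then show ?thesis by simp
qed

lemma subinvariant_weight_above_spec_rad:
  fixes G :: "'l::finite \<Rightarrow> 'l \<Rightarrow> real"
  assumes nonneg: "\<And>u v. 0 \<le> G u v" and r: "spec_rad G < r"
  shows "\<exists>w. (\<forall>u. 0 < w u) \<and> (\<forall>v. (\<Sum>u\<in>UNIV. w u * G u v) \<le> r * w v)"
proof -
  define s where "s = (spec_rad G + r) / 2"
  have s: "spec_rad G < s" "0 < s" "s < r" using r spec_rad_nonneg[of G] by (auto simp: s_def)
  obtain C where C: "\<And>k u v. \<bar>matpow G k u v\<bar> \<le> C * s ^ k"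
    using matpow_le_spec_rad_pow[OF s(1)] by blast
  have "(\<lambda>N. real CARD('l) * C * (s / r) ^ N) \<longlonglongrightarrow> 0"
    using s by (intro tendsto_mult_right_zero LIMSEQ_power_zero) auto
  then have "\<forall>\<^sub>F N in sequentially. real CARD('l) * C * (s / r) ^ N < 1 \<and> 0 < N"
    by (intro eventually_conj order_tendstoD(2) eventually_gt_at_top) auto
  then obtain N where N: "real CARD('l) * C * (s / r) ^ N < 1" "0 < N"
    by (auto simp: eventually_sequentially)
  have tail: "(\<Sum>u\<in>UNIV. matpow G N u v) / r ^ N \<le> 1" for v
  proof -
    have "(\<Sum>u\<in>UNIV. matpow G N u v) \<le> (\<Sum>u\<in>(UNIV::'l set). C * s ^ N)"
      using C by (intro sum_mono) (metis abs_le_D1)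
    then have "(\<Sum>u\<in>UNIV. matpow G N u v) / r ^ N \<le> real CARD('l) * C * (s / r) ^ N"
      using s by (simp add: divide_le_eq power_divide)
    then show ?thesis using N by simp
  qed
  define w where "w = neumann_weight G r N"
  have "(\<Sum>u\<in>UNIV. w u * G u v) \<le> r * w v" for v
    using neumann_weight_mult[of r G N v] tail[of v] s unfolding w_def
    by (simp add: mult_left_le)
  moreover have "0 < w u" for u
    using neumann_weight_ge_1[of G r N u] nonneg s N unfolding w_def by simp
  ultimately show ?thesis by blast
qed

lemma matpow_row_sum_ge_spec_rad_pow:
  fixes G :: "'l::finite \<Rightarrow> 'l \<Rightarrow> real"
  assumes nonneg: "\<And>u v. 0 \<le> G u v"
  obtains i a where "0 < a" "\<And>k. a * spec_rad G ^ k \<le> (\<Sum>w\<in>UNIV. matpow G k i w)"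
proof -
  obtain c \<phi> i where c: "cmod c = spec_rad G" and "\<phi> i \<noteq> 0"
    and \<phi>: "\<forall>u. (\<Sum>w\<in>UNIV. complex_of_real (G u w) * \<phi> w) = c * \<phi> u"
    using spec_rad_attained[of G] unfolding is_eigenvalue_def by blast
  define \<Phi> where "\<Phi> = (\<Sum>w\<in>UNIV. cmod (\<phi> w))"
  have \<Phi>: "cmod (\<phi> w) \<le> \<Phi>" for w
    unfolding \<Phi>_def by (intro member_le_sum) auto
  have "0 < \<Phi>" using \<Phi>[of i] \<open>\<phi> i \<noteq> 0\<close> by (smt (verit) zero_less_norm_iff)
  have "spec_rad G ^ k * cmod (\<phi> i) \<le> (\<Sum>w\<in>UNIV. matpow G k i w) * \<Phi>" for k
  proof -
    have "spec_rad G ^ k * cmod (\<phi> i) = cmod (\<Sum>w\<in>UNIV. complex_of_real (matpow G k i w) * \<phi> w)"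
      using matpow_eigenvector[OF \<phi>] c by (simp add: norm_mult norm_power)
    also have "\<dots> \<le> (\<Sum>w\<in>UNIV. matpow G k i w * cmod (\<phi> w))"
      by (rule order_trans[OF norm_sum]) (simp add: norm_mult matpow_nonneg[of G, OF nonneg])
    also have "\<dots> \<le> (\<Sum>w\<in>UNIV. matpow G k i w * \<Phi>)"
      using matpow_nonneg[of G, OF nonneg] \<Phi> by (intro sum_mono mult_left_mono) auto
    finally show ?thesis by (simp add: sum_distrib_right)
  qed
  then show thesis
    using that[of "cmod (\<phi> i) / \<Phi>" i] \<open>0 < \<Phi>\<close> \<open>\<phi> i \<noteq> 0\<close>
    by (simp add: field_simps)
qed

lemma strongly_connected_matpow_pos:
  fixes G :: "'l::finite \<Rightarrow> 'l \<Rightarrow> real"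
  assumes nonneg: "\<And>u v. 0 \<le> G u v" and "strongly_connected G"
  shows "\<exists>m. 0 < matpow G m x y"
proof -
  have "(x, y) \<in> {(a, b). G a b > 0}\<^sup>*"
    using assms(2) unfolding strongly_connected_def by blast
  then show ?thesis
  proof (induction rule: rtrancl_induct)
    case base
    show ?case by (intro exI[of _ 0]) simp
  next
    case (step y z)
    then obtain m where m: "0 < matpow G m x y" by blast
    have "matpow G m x y * G y z \<le> (\<Sum>w\<in>UNIV. matpow G m x w * G w z)"
      using matpow_nonneg[of G, OF nonneg] nonneg by (intro member_le_sum) auto
    moreover have "0 < matpow G m x y * G y z" using m step(2) by simp
    ultimately show ?case by (intro exI[of _ "Suc m"]) simp
  qed
qed

lemma strongly_connected_uniform_reach:
  fixes G :: "'l::finite \<Rightarrow> 'l \<Rightarrow> real"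
  assumes nonneg: "\<And>u v. 0 \<le> G u v" and sc: "strongly_connected G" and s: "0 < s"
  obtains M p where "0 < p" "\<And>x y. p \<le> (\<Sum>m<M. matpow G m x y / s ^ m)"
proof -
  obtain len where len: "\<And>x y. 0 < matpow G (len x y) x y"
    using strongly_connected_matpow_pos[of G, OF nonneg sc] by metis
  define M where "M = Suc (Max (range (case_prod len)))"
  define P where "P x y = (\<Sum>m<M. matpow G m x y / s ^ m)" for x y
  have "0 < P x y" for x y
  proof -
    have "len x y < M"
      unfolding M_def by (intro le_imp_less_Suc Max_ge) (auto intro: image_eqI[of _ _ "(x, y)"])
    then have "matpow G (len x y) x y / s ^ len x y \<le> P x y"
      unfolding P_def using matpow_nonneg[of G, OF nonneg] s by (intro member_le_sum) auto
    moreover have "0 < matpow G (len x y) x y / s ^ len x y" using len s by simp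
    ultimately show ?thesis by linarith
  qed
  then have "0 < Min (range (case_prod P))" by (subst Min_gr_iff) auto
  moreover have "Min (range (case_prod P)) \<le> P x y" for x y by (rule Min_le) auto
  ultimately show thesis using that unfolding P_def by blast
qed

lemma neumann_weight_ge_row_sums:
  fixes G :: "'l::finite \<Rightarrow> 'l \<Rightarrow> real"
  assumes nonneg: "\<And>u v. 0 \<le> G u v" and s: "0 < s"
    and reach: "\<And>x y. p \<le> (\<Sum>m<M. matpow G m x y / s ^ m)"
  shows "p * (\<Sum>k<K. (\<Sum>w\<in>UNIV. matpow G k i w) / s ^ k) \<le> real M * neumann_weight G s (K + M) v"
proof -
  have "p * (\<Sum>k<K. (\<Sum>w\<in>UNIV. matpow G k i w) / s ^ k) = (\<Sum>k<K. \<Sum>w\<in>UNIV. matpow G k i w / s ^ k * p)"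
    by (simp add: sum_distrib_left sum_distrib_right sum_divide_distrib mult.commute)
  also have "\<dots> \<le> (\<Sum>k<K. \<Sum>w\<in>UNIV. matpow G k i w / s ^ k * (\<Sum>m<M. matpow G m w v / s ^ m))"
    using reach matpow_nonneg[of G, OF nonneg] s by (intro sum_mono mult_left_mono) auto
  also have "\<dots> = (\<Sum>k<K. \<Sum>m<M. \<Sum>w\<in>UNIV. matpow G k i w * matpow G m w v / s ^ (k + m))"
    by (simp add: sum_distrib_left power_add) (intro sum.cong refl, subst sum.swap, simp add: mult.commute)
  also have "\<dots> = (\<Sum>m<M. \<Sum>k<K. matpow G (k + m) i v / s ^ (k + m))"
    by (subst sum.swap) (simp add: matpow_add sum_divide_distrib)
  also have "\<dots> \<le> (\<Sum>m<M. \<Sum>j<K + M. (\<Sum>u\<in>UNIV. matpow G j u v) / s ^ j)"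
  proof (intro sum_mono)
    fix m assume "m \<in> {..<M}"
    have "(\<Sum>k<K. matpow G (k + m) i v / s ^ (k + m)) = (\<Sum>j\<in>(\<lambda>k. k + m) ` {..<K}. matpow G j i v / s ^ j)"
      by (subst sum.reindex) (auto simp: inj_on_def)
    also have "\<dots> \<le> (\<Sum>j<K + M. matpow G j i v / s ^ j)"
      using \<open>m \<in> {..<M}\<close> matpow_nonneg[of G, OF nonneg] s by (intro sum_mono2) auto
    also have "\<dots> \<le> (\<Sum>j<K + M. (\<Sum>u\<in>UNIV. matpow G j u v) / s ^ j)"
      using matpow_nonneg[of G, OF nonneg] s
      by (intro sum_mono divide_right_mono member_le_sum) auto
    finally show "(\<Sum>k<K. matpow G (k + m) i v / s ^ (k + m)) \<le> \<dots>" .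
  qed
  also have "\<dots> = real M * neumann_weight G s (K + M) v"
    by (simp add: neumann_weight_def)
  finally show ?thesis .
qed

lemma neumann_weight_unbounded:
  fixes G :: "'l::finite \<Rightarrow> 'l \<Rightarrow> real"
  assumes nonneg: "\<And>u v. 0 \<le> G u v" and sc: "strongly_connected G"
    and s: "0 < s" "s < spec_rad G"
  obtains N where "\<And>v. B \<le> neumann_weight G s N v"
proof -
  obtain i a where a: "0 < a" "\<And>k. a * spec_rad G ^ k \<le> (\<Sum>w\<in>UNIV. matpow G k i w)"
    using matpow_row_sum_ge_spec_rad_pow[of G] nonneg by metis
  obtain M p where p: "0 < p" "\<And>x y. p \<le> (\<Sum>m<M. matpow G m x y / s ^ m)"
    using strongly_connected_uniform_reach[of G s] nonneg sc s(1) by metis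
  have "0 < M"
  proof (rule ccontr)
    assume "\<not> 0 < M"
    then show False using p(1) p(2)[of i i] by simp
  qed
  obtain K :: nat where K: "B * real M / (p * a) < real K"
    using reals_Archimedean2 by metis
  have aK: "a * real K \<le> (\<Sum>k<K. (\<Sum>w\<in>UNIV. matpow G k i w) / s ^ k)"
  proof -
    have "a * real K = (\<Sum>k<K. a * 1)" by simp
    also have "\<dots> \<le> (\<Sum>k<K. a * (spec_rad G / s) ^ k)"
      using s a(1) by (intro sum_mono mult_left_mono one_le_power) auto
    also have "\<dots> \<le> (\<Sum>k<K. (\<Sum>w\<in>UNIV. matpow G k i w) / s ^ k)"
      using a(2) s by (intro sum_mono) (simp add: power_divide divide_right_mono)
    finally show ?thesis .
  qed
  have "B * real M < neumann_weight G s (K + M) v * real M" for v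
  proof -
    have "B * real M < p * (a * real K)"
      using K p(1) a(1) by (simp add: field_simps)
    also have "\<dots> \<le> p * (\<Sum>k<K. (\<Sum>w\<in>UNIV. matpow G k i w) / s ^ k)"
      using aK p(1) by simp
    also have "\<dots> \<le> neumann_weight G s (K + M) v * real M"
      using neumann_weight_ge_row_sums[where K = K and i = i and v = v] nonneg s(1) p
      by (simp add: mult.commute)
    finally show ?thesis .
  qed
  then show thesis
    using that[of "K + M"] \<open>0 < M\<close> by (simp add: less_imp_le)
qed

lemma superinvariant_weight_below_spec_rad:
  fixes G :: "'l::finite \<Rightarrow> 'l \<Rightarrow> real"
  assumes nonneg: "\<And>u v. 0 \<le> G u v" and sc: "strongly_connected G" and r: "r < spec_rad G"
  shows "\<exists>w. (\<forall>u. 0 < w u \<and> w u \<le> 1) \<and> (\<forall>v. r * w v \<le> (\<Sum>u\<in>UNIV. w u * G u v))"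
proof (cases "r \<le> 0")
  case True
  have "0 \<le> (\<Sum>u\<in>UNIV. G u v)" for v using nonneg by (simp add: sum_nonneg)
  then show ?thesis by (intro exI[of _ "\<lambda>_. 1"]) (simp add: order_trans[OF True])
next
  case False
  define s where "s = (r + spec_rad G) / 2"
  have s: "0 < s" "r < s" "s < spec_rad G" using False r by (auto simp: s_def)
  obtain N where N: "\<And>v. s / (s - r) \<le> neumann_weight G s N v"
    using neumann_weight_unbounded[of G s] nonneg sc s(1,3) by metis
  define w where "w = neumann_weight G s N"
  have w_pos: "0 < w u" for u
    using N[of u] s by (simp add: w_def) (smt (verit) divide_pos_pos)
  have w_super: "r * w v \<le> (\<Sum>u\<in>UNIV. w u * G u v)" for v
  proof -
    have "s \<le> (s - r) * w v" using N[of v] s by (simp add: w_def pos_divide_le_eq mult.commute)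
    then have "r * w v \<le> s * (w v - 1)" by (simp add: algebra_simps)
    also have "\<dots> \<le> s * (w v + (\<Sum>u\<in>UNIV. matpow G N u v) / s ^ N - 1)"
      using s matpow_nonneg[of G, OF nonneg] by (auto intro!: mult_left_mono sum_nonneg divide_nonneg_pos)
    finally show ?thesis using neumann_weight_mult[of s G N v] s by (simp add: w_def)
  qed
  define m where "m = Max (range w)"
  have w_le: "w u \<le> m" for u unfolding m_def by (rule Max_ge) auto
  have "0 < m" using w_pos[of undefined] w_le[of undefined] by linarith
  have "r * (w v / m) \<le> (\<Sum>u\<in>UNIV. w u / m * G u v)" for v
  proof -
    have "r * (w v / m) \<le> (\<Sum>u\<in>UNIV. w u * G u v) / m"
      using w_super[of v] \<open>0 < m\<close> by (simp add: divide_right_mono)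
    then show ?thesis by (simp add: sum_divide_distrib)
  qed
  moreover have "0 < w u / m \<and> w u / m \<le> 1" for u
    using w_pos[of u] w_le[of u] \<open>0 < m\<close> by simp
  ultimately show ?thesis by (intro exI[of _ "\<lambda>u. w u / m"]) blast
qed

lemma tot_fun_upd: "tot (x(u := a)) + x u = tot x + a"
proof -
  have "tot y = y u + (\<Sum>v\<in>UNIV - {u}. y v)" for y
    unfolding tot_def by (rule sum.remove) auto
  moreover have "(\<Sum>v\<in>UNIV - {u}. (x(u := a)) v) = (\<Sum>v\<in>UNIV - {u}. x v)"
    by (rule sum.cong) auto
  ultimately show ?thesis by simp
qed

lemma tot_eq_0_iff: "tot x = 0 \<longleftrightarrow> x = (\<lambda>_. 0)"
  unfolding tot_def by (auto simp: fun_eq_iff)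

lemma real_tot: "real (tot x) = (\<Sum>u\<in>UNIV. real (x u))"
  unfolding tot_def by simp

definition wsize :: "('l::finite \<Rightarrow> real) \<Rightarrow> ('l \<Rightarrow> nat) \<Rightarrow> real" where
  "wsize w x = (\<Sum>u\<in>UNIV. w u * real (x u))"

lemma wsize_fun_upd: "wsize w (x(u := a)) = wsize w x + w u * (real a - real (x u))"
proof -
  have "wsize w y = w u * real (y u) + (\<Sum>v\<in>UNIV - {u}. w v * real (y v))" for y
    unfolding wsize_def by (rule sum.remove) auto
  moreover have "(\<Sum>v\<in>UNIV - {u}. w v * real ((x(u := a)) v)) = (\<Sum>v\<in>UNIV - {u}. w v * real (x v))"
    by (rule sum.cong) auto
  ultimately show ?thesis by (simp add: algebra_simps)
qed

lemma wsize_Suc: "wsize w (x(u := x u + 1)) = wsize w x + w u"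
  by (simp add: wsize_fun_upd)

lemma wsize_diff_1: "0 < x u \<Longrightarrow> wsize w (x(u := x u - 1)) = wsize w x - w u"
  by (simp add: wsize_fun_upd of_nat_diff)

lemma wsize_zero: "wsize w (\<lambda>_. 0) = 0"
  by (simp add: wsize_def)

lemma wsize_nonneg: "(\<And>u. 0 \<le> w u) \<Longrightarrow> 0 \<le> wsize w x"
  unfolding wsize_def by (intro sum_nonneg) auto

lemma wsize_ge_component: "(\<And>u. 0 \<le> w u) \<Longrightarrow> w u * real (x u) \<le> wsize w x"
  unfolding wsize_def by (rule member_le_sum) auto

lemma wsize_ge_min:
  assumes "\<And>u. wmin \<le> w u" "0 \<le> wmin" "x \<noteq> (\<lambda>_. 0)"
  shows "wmin \<le> wsize w x"
proof -
  obtain u where "x u \<noteq> 0" using assms(3) by (auto simp: fun_eq_iff)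
  have w0: "0 \<le> w v" for v using assms(1)[of v] assms(2) by linarith
  have "w u * 1 \<le> w u * real (x u)" using w0[of u] \<open>x u \<noteq> 0\<close> by (intro mult_left_mono) auto
  then show ?thesis using assms(1)[of u] wsize_ge_component[where w = w and u = u and x = x, OF w0] by linarith
qed

lemma wsize_le_tot: "(\<And>u. w u \<le> c) \<Longrightarrow> wsize w x \<le> c * real (tot x)"
  unfolding wsize_def real_tot sum_distrib_left by (intro sum_mono mult_right_mono) auto

lemma mult_exp_minus_le: "0 \<le> t \<Longrightarrow> t * exp (- t) \<le> 1 - exp (- t :: real)"
  using mult_right_mono[OF exp_ge_add_one_self[of t], of "exp (- t)"]
  by (simp add: exp_minus algebra_simps)

lemma exp_minus_one_le: "exp t - 1 \<le> t * exp (t :: real)"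
  using mult_right_mono[OF exp_ge_add_one_self[of "- t"], of "exp t"]
  by (simp add: exp_minus algebra_simps)

lemma exp_minus_mult_shift:
  fixes \<kappa> W t :: real
  shows "exp (- \<kappa> * (W + t)) = exp (- \<kappa> * W) * exp (- (\<kappa> * t))"
  "exp (- \<kappa> * (W - t)) = exp (- \<kappa> * W) * exp (\<kappa> * t)"
  by (simp_all add: mult_exp_exp algebra_simps)

lemma ln_diff_le: "0 < a \<Longrightarrow> 0 < b \<Longrightarrow> ln a - ln b \<le> (a - b) / (b :: real)"
  using ln_le_minus_one[of "a / b"] by (simp add: ln_div diff_divide_distrib)

lemma suminf_infinite_if_ge_harmonic:
  fixes f :: "nat \<Rightarrow> ennreal"
  assumes c: "0 < c" and f: "\<And>k. K \<le> k \<Longrightarrow> ennreal (c / real (k + m)) \<le> f k"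
  shows "(\<Sum>k. f k) = \<infinity>"
proof (rule ccontr)
  define g where "g k = (if K \<le> k then c / real (k + m) else 0)" for k
  have g_nonneg: "0 \<le> g k" for k using c by (simp add: g_def)
  assume "(\<Sum>k. f k) \<noteq> \<infinity>"
  moreover have "(\<Sum>k. ennreal (g k)) \<le> (\<Sum>k. f k)"
    using f by (intro suminf_le) (auto simp: g_def)
  ultimately have "summable g"
    using g_nonneg by (intro summable_suminf_not_top) (auto simp: top_unique)
  then have "summable (\<lambda>n. g (n + K))" by simp
  moreover have "g (n + K) = c * inverse (real (n + (K + m)))" for n
    by (simp add: g_def divide_inverse add.assoc)
  ultimately have "summable (\<lambda>n. inverse (real (n + (K + m))))" using c by simp
  then show False
    using not_summable_harmonic[where 'a = real] summable_iff_shift[of "\<lambda>n. inverse (real n)" "K + m"] by simp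
qed

lemma LIMSEQ_le_midpoint:
  fixes f :: "nat \<Rightarrow> real"
  assumes "f \<longlonglongrightarrow> L" "L < \<delta>"
  obtains N where "\<And>n. N \<le> n \<Longrightarrow> f n \<le> \<delta> - (\<delta> - L) / 2"
proof -
  have "\<forall>\<^sub>F n in sequentially. f n < \<delta> - (\<delta> - L) / 2"
    using assms(2) by (intro order_tendstoD(2)[OF assms(1)]) argo
  then obtain N where "\<forall>n\<ge>N. f n < \<delta> - (\<delta> - L) / 2" by (auto simp: eventually_sequentially)
  then show thesis by (intro that[of N]) (simp add: less_imp_le)
qed

lemma LIMSEQ_ge_midpoint:
  fixes f :: "nat \<Rightarrow> real"
  assumes "f \<longlonglongrightarrow> L" "\<delta> < L"
  obtains N where "\<And>n. N \<le> n \<Longrightarrow> \<delta> + (L - \<delta>) / 2 \<le> f n"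
proof -
  have "\<forall>\<^sub>F n in sequentially. \<delta> + (L - \<delta>) / 2 < f n"
    using assms(2) by (intro order_tendstoD(1)[OF assms(1)]) argo
  then obtain N where "\<forall>n\<ge>N. \<delta> + (L - \<delta>) / 2 < f n" by (auto simp: eventually_sequentially)
  then show thesis by (intro that[of N]) (simp add: less_imp_le)
qed

lemma nn_integral_fun_upd_Suc:
  fixes h :: "('l \<Rightarrow> nat) \<Rightarrow> ennreal"
  shows "(\<integral>\<^sup>+x. h (x(u := Suc (x u))) \<partial>count_space UNIV)
     = (\<integral>\<^sup>+y. (if 0 < y u then h y else 0) \<partial>count_space UNIV)"
proof -
  have "bij_betw (\<lambda>x::'l \<Rightarrow> nat. x(u := Suc (x u))) UNIV {y. 0 < y u}"
    by (rule bij_betwI[where g = "\<lambda>y. y(u := y u - 1)"]) (auto simp: fun_eq_iff)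
  then have "(\<integral>\<^sup>+x. h (x(u := Suc (x u))) \<partial>count_space UNIV) = (\<integral>\<^sup>+y. h y \<partial>count_space {y. 0 < y u})"
    by (rule nn_integral_bij_count_space)
  also have "\<dots> = (\<integral>\<^sup>+y. (if 0 < y u then h y else 0) \<partial>count_space UNIV)"
    by (subst nn_integral_count_space_indicator) (auto intro!: nn_integral_cong simp: indicator_def)
  finally show ?thesis .
qed

section \<open>The embedded jump chain\<close>

locale sis_chain =
  fixes \<beta> \<beta>i :: "nat \<Rightarrow> real" and G :: "'l::finite \<Rightarrow> 'l \<Rightarrow> real" and \<eta> \<delta> :: real
  assumes G_nonneg: "\<And>u v. 0 \<le> G u v" and eta_pos: "0 < \<eta>" and delta_pos: "0 < \<delta>"
    and beta_pos: "\<And>n. 0 < \<beta> n" and betai_pos: "\<And>n. 0 < \<beta>i n"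
    and beta_bdd: "\<exists>B. \<forall>n. \<beta> n \<le> B" and betai_bdd: "\<exists>B. \<forall>n. \<beta>i n \<le> B"
begin

abbreviation "birth \<equiv> birth_rate \<beta> \<beta>i G \<eta>"

abbreviation "death \<equiv> death_rate \<delta>"

abbreviation "rate \<equiv> total_rate \<beta> \<beta>i G \<eta> \<delta>"

abbreviation "hit \<equiv> hit_mass \<beta> \<beta>i G \<eta> \<delta>"

lemma birth_nonneg: "0 \<le> birth x u"
  using G_nonneg beta_pos betai_pos eta_pos unfolding birth_rate_def
  by (intro add_nonneg_nonneg mult_nonneg_nonneg sum_nonneg) (auto simp: less_imp_le)

lemma birth_pos: "0 < x u \<Longrightarrow> 0 < birth x u"
  using G_nonneg beta_pos[of "tot x"] betai_pos[of "tot x"] eta_pos unfolding birth_rate_def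
  by (intro add_nonneg_pos mult_nonneg_nonneg sum_nonneg mult_pos_pos) (auto simp: less_imp_le)

lemma death_nonneg: "0 \<le> death x u"
  using delta_pos by (simp add: death_rate_def)

lemma rate_eq: "rate x = (\<Sum>u\<in>UNIV. birth x u) + (\<Sum>u\<in>UNIV. death x u)"
  unfolding total_rate_def by (simp add: sum.distrib)

lemma rate_pos:
  assumes "x \<noteq> (\<lambda>_. 0)"
  shows "0 < rate x"
proof -
  obtain u where "0 < x u" using assms by (auto simp: fun_eq_iff)
  then have "0 < death x u" using delta_pos by (simp add: death_rate_def)
  also have "\<dots> \<le> (\<Sum>u\<in>UNIV. death x u)" using death_nonneg by (intro member_le_sum) auto
  finally show ?thesis using birth_nonneg
    unfolding rate_eq by (simp add: add_nonneg_pos sum_nonneg)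
qed

lemma rate_le_linear: "\<exists>Q>0. \<forall>x. rate x \<le> Q * real (tot x)"
proof -
  obtain B Bi where B: "\<And>n. \<beta> n \<le> B" and Bi: "\<And>n. \<beta>i n \<le> Bi"
    using beta_bdd betai_bdd by blast
  define Q where "Q = B * (\<Sum>u\<in>UNIV. \<Sum>v\<in>UNIV. G u v) + Bi * \<eta> + \<delta>"
  have "0 \<le> B" "0 \<le> Bi"
    using B[of 0] Bi[of 0] beta_pos[of 0] betai_pos[of 0] by linarith+
  have "rate x \<le> Q * real (tot x)" for x
  proof -
    define S where "S = (\<Sum>u\<in>UNIV. \<Sum>v\<in>UNIV. G u v * real (x v))"
    define GG where "GG = (\<Sum>u\<in>UNIV. \<Sum>v\<in>UNIV. G u v)"
    have "x v \<le> tot x" for v unfolding tot_def by (rule member_le_sum) auto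
    then have "S \<le> GG * real (tot x)"
      unfolding S_def GG_def using G_nonneg
      by (auto simp: sum_distrib_right intro!: sum_mono mult_left_mono)
    moreover have "0 \<le> S"
      unfolding S_def using G_nonneg by (intro sum_nonneg mult_nonneg_nonneg) auto
    ultimately have "\<beta> (tot x) * S \<le> B * (GG * real (tot x))"
      using B \<open>0 \<le> B\<close> by (intro mult_mono) auto
    moreover have "\<beta>i (tot x) * \<eta> * real (tot x) \<le> Bi * \<eta> * real (tot x)"
      using Bi eta_pos by (intro mult_right_mono) auto
    moreover have "rate x = \<beta> (tot x) * S + \<beta>i (tot x) * \<eta> * real (tot x) + \<delta> * real (tot x)"
      unfolding rate_eq S_def birth_rate_def death_rate_def
      by (simp add: sum.distrib sum_distrib_left real_tot)
    moreover have "Q * real (tot x) = B * (GG * real (tot x)) + Bi * \<eta> * real (tot x) + \<delta> * real (tot x)"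
      unfolding Q_def GG_def by (simp add: algebra_simps)
    ultimately show ?thesis by linarith
  qed
  moreover have "0 < Q"
    using \<open>0 \<le> B\<close> \<open>0 \<le> Bi\<close> G_nonneg eta_pos delta_pos unfolding Q_def
    by (intro add_nonneg_pos add_nonneg_nonneg mult_nonneg_nonneg sum_nonneg) auto
  ultimately show ?thesis by blast
qed

definition jump_mean :: "(('l \<Rightarrow> nat) \<Rightarrow> ennreal) \<Rightarrow> ('l \<Rightarrow> nat) \<Rightarrow> ennreal" where
  "jump_mean f x = (\<Sum>u\<in>UNIV. ennreal (birth x u / rate x) * f (x(u := x u + 1))
      + ennreal (death x u / rate x) * f (x(u := x u - 1)))"

text \<open>
  At x u = 0 the update x(u := x u - 1) is x itself (truncated subtraction); this is harmless
  since the death rate at u then vanishes.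
\<close>

definition generator :: "(('l \<Rightarrow> nat) \<Rightarrow> real) \<Rightarrow> ('l \<Rightarrow> nat) \<Rightarrow> real" where
  "generator f x = (\<Sum>u\<in>UNIV. birth x u * (f (x(u := x u + 1)) - f x)
      + death x u * (f (x(u := x u - 1)) - f x))"

lemma generator_add_rate_mult:
  "generator f x + rate x * f x
     = (\<Sum>u\<in>UNIV. birth x u * f (x(u := x u + 1)) + death x u * f (x(u := x u - 1)))"
  unfolding generator_def total_rate_def sum_distrib_right
  by (subst sum.distrib[symmetric]) (rule sum.cong; simp add: algebra_simps)

lemma jump_mean_ennreal:
  assumes f: "\<And>y. 0 \<le> f y" and x: "x \<noteq> (\<lambda>_. 0)"
  shows "jump_mean (\<lambda>y. ennreal (f y)) x = ennreal (f x + generator f x / rate x)"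
proof -
  have q: "0 < rate x" by (rule rate_pos[OF x])
  have bq: "0 \<le> birth x u / rate x" and dq: "0 \<le> death x u / rate x" for u
    using divide_nonneg_pos[OF birth_nonneg q] divide_nonneg_pos[OF death_nonneg q] by simp_all
  have "ennreal (birth x u / rate x) * ennreal (f (x(u := x u + 1)))
      + ennreal (death x u / rate x) * ennreal (f (x(u := x u - 1)))
      = ennreal (birth x u / rate x * f (x(u := x u + 1)) + death x u / rate x * f (x(u := x u - 1)))" for u
    by (simp only: ennreal_plus[OF mult_nonneg_nonneg[OF bq f] mult_nonneg_nonneg[OF dq f]]
        ennreal_mult[OF bq f] ennreal_mult[OF dq f])
  then have "jump_mean (\<lambda>y. ennreal (f y)) x = ennreal (\<Sum>u\<in>UNIV. birth x u / rate x * f (x(u := x u + 1))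
      + death x u / rate x * f (x(u := x u - 1)))"
    unfolding jump_mean_def using bq dq f
    by (simp only:) (intro sum_ennreal add_nonneg_nonneg mult_nonneg_nonneg)
  also have "(\<Sum>u\<in>UNIV. birth x u / rate x * f (x(u := x u + 1)) + death x u / rate x * f (x(u := x u - 1)))
      = (\<Sum>u\<in>UNIV. birth x u * f (x(u := x u + 1)) + death x u * f (x(u := x u - 1))) / rate x"
    by (simp add: sum_divide_distrib add_divide_distrib)
  also have "\<dots> = (generator f x + rate x * f x) / rate x"
    by (simp only: generator_add_rate_mult)
  finally show ?thesis using q by (simp add: add_divide_distrib add.commute)
qed

lemma jump_mean_le_of_drift:
  assumes V: "\<And>y. 0 \<le> V y" and x: "x \<noteq> (\<lambda>_. 0)" and drift: "generator V x \<le> -1"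
  shows "jump_mean (\<lambda>y. ennreal (V y)) x + 1 / ennreal (rate x) \<le> ennreal (V x)"
proof -
  have q: "0 < rate x" by (rule rate_pos[OF x])
  have "0 \<le> (generator V x + rate x * V x) / rate x"
    unfolding generator_add_rate_mult using birth_nonneg death_nonneg V q
    by (intro divide_nonneg_pos sum_nonneg add_nonneg_nonneg mult_nonneg_nonneg) auto
  then have "0 \<le> V x + generator V x / rate x" using q by (simp add: field_simps)
  moreover have "V x + generator V x / rate x + 1 / rate x \<le> V x"
    using drift q by (simp add: add_divide_distrib[symmetric] divide_nonpos_pos)
  moreover have "1 / ennreal (rate x) = ennreal (1 / rate x)"
    using divide_ennreal[of 1 "rate x"] q by simp
  ultimately show ?thesis
    using q by (simp add: jump_mean_ennreal[OF V x] ennreal_plus[symmetric] ennreal_leI del: ennreal_plus)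
qed

lemma jump_mean_ge_of_drift:
  assumes U: "\<And>y. 0 \<le> U y" and x: "x \<noteq> (\<lambda>_. 0)" and drift: "0 \<le> generator U x"
  shows "ennreal (U x) \<le> jump_mean (\<lambda>y. ennreal (U y)) x"
  using drift rate_pos[OF x] by (simp add: jump_mean_ennreal[OF U x] ennreal_leI)

lemma generator_lincomb:
  "generator (\<lambda>y. a * f y + b * g y + c) x = a * generator f x + b * generator g x"
  unfolding generator_def sum_distrib_left
  by (subst sum.distrib[symmetric]) (rule sum.cong; simp add: algebra_simps)

lemma generator_add_const: "generator (\<lambda>y. f y + c) x = generator f x"
  unfolding generator_def by simp

lemma generator_mono_at:
  assumes "f x = g x" and "\<And>y. g y \<le> f y"
  shows "generator g x \<le> generator f x"
  unfolding generator_def using assms birth_nonneg death_nonneg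
  by (intro sum_mono add_mono mult_left_mono) auto

lemma nn_integral_birth_term:
  "(\<integral>\<^sup>+y. (if 0 < y u \<and> y(u := y u - 1) \<noteq> (\<lambda>_. 0)
        then m (y(u := y u - 1)) * ennreal (birth (y(u := y u - 1)) u / rate (y(u := y u - 1)))
        else 0) * f y \<partial>count_space UNIV)
   = (\<integral>\<^sup>+x. (if x = (\<lambda>_. 0) then 0
        else m x * (ennreal (birth x u / rate x) * f (x(u := x u + 1)))) \<partial>count_space UNIV)"
proof -
  define H where "H y = (if y(u := y u - 1) \<noteq> (\<lambda>_. 0)
    then m (y(u := y u - 1)) * ennreal (birth (y(u := y u - 1)) u / rate (y(u := y u - 1)))
    else 0) * f y" for y
  have "(\<integral>\<^sup>+y. (if 0 < y u \<and> y(u := y u - 1) \<noteq> (\<lambda>_. 0)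
        then m (y(u := y u - 1)) * ennreal (birth (y(u := y u - 1)) u / rate (y(u := y u - 1)))
        else 0) * f y \<partial>count_space UNIV)
      = (\<integral>\<^sup>+y. (if 0 < y u then H y else 0) \<partial>count_space UNIV)"
    by (intro nn_integral_cong) (simp add: H_def)
  also have "\<dots> = (\<integral>\<^sup>+x. H (x(u := Suc (x u))) \<partial>count_space UNIV)"
    by (rule nn_integral_fun_upd_Suc[symmetric])
  also have "\<dots> = (\<integral>\<^sup>+x. (if x = (\<lambda>_. 0) then 0
      else m x * (ennreal (birth x u / rate x) * f (x(u := x u + 1)))) \<partial>count_space UNIV)"
    by (intro nn_integral_cong) (simp add: H_def mult.assoc)
  finally show ?thesis .
qed

lemma nn_integral_death_term:
  "(\<integral>\<^sup>+y. m (y(u := y u + 1)) * ennreal (death (y(u := y u + 1)) u / rate (y(u := y u + 1))) * f y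
      \<partial>count_space UNIV)
   = (\<integral>\<^sup>+x. (if x = (\<lambda>_. 0) then 0
        else m x * (ennreal (death x u / rate x) * f (x(u := x u - 1)))) \<partial>count_space UNIV)"
proof -
  have "(\<integral>\<^sup>+y. m (y(u := y u + 1)) * ennreal (death (y(u := y u + 1)) u / rate (y(u := y u + 1))) * f y
      \<partial>count_space UNIV)
      = (\<integral>\<^sup>+x. (if 0 < x u then m x * (ennreal (death x u / rate x) * f (x(u := x u - 1))) else 0)
        \<partial>count_space UNIV)"
    by (subst nn_integral_fun_upd_Suc[symmetric]) (simp add: mult.assoc)
  also have "\<dots> = (\<integral>\<^sup>+x. (if x = (\<lambda>_. 0) then 0
      else m x * (ennreal (death x u / rate x) * f (x(u := x u - 1)))) \<partial>count_space UNIV)"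
    by (intro nn_integral_cong) (auto simp: death_rate_def)
  finally show ?thesis .
qed

lemma nn_integral_jump_step:
  "(\<integral>\<^sup>+y. jump_step \<beta> \<beta>i G \<eta> \<delta> m y * f y \<partial>count_space UNIV)
     = (\<integral>\<^sup>+x. (if x = (\<lambda>_. 0) then 0 else m x * jump_mean f x) \<partial>count_space UNIV)"
proof -
  have "(\<integral>\<^sup>+y. jump_step \<beta> \<beta>i G \<eta> \<delta> m y * f y \<partial>count_space UNIV)
      = (\<Sum>u\<in>UNIV. (\<integral>\<^sup>+y. (if 0 < y u \<and> y(u := y u - 1) \<noteq> (\<lambda>_. 0)
            then m (y(u := y u - 1)) * ennreal (birth (y(u := y u - 1)) u / rate (y(u := y u - 1)))
            else 0) * f y \<partial>count_space UNIV)
        + (\<integral>\<^sup>+y. m (y(u := y u + 1)) * ennreal (death (y(u := y u + 1)) u / rate (y(u := y u + 1))) * f y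
            \<partial>count_space UNIV))"
    unfolding jump_step_def by (simp add: sum_distrib_right distrib_right nn_integral_sum nn_integral_add)
  also have "\<dots> = (\<Sum>u\<in>UNIV.
        (\<integral>\<^sup>+x. (if x = (\<lambda>_. 0) then 0
          else m x * (ennreal (birth x u / rate x) * f (x(u := x u + 1)))) \<partial>count_space UNIV)
      + (\<integral>\<^sup>+x. (if x = (\<lambda>_. 0) then 0
          else m x * (ennreal (death x u / rate x) * f (x(u := x u - 1)))) \<partial>count_space UNIV))"
    unfolding nn_integral_birth_term nn_integral_death_term ..
  also have "\<dots> = (\<integral>\<^sup>+x. (if x = (\<lambda>_. 0) then 0 else m x * jump_mean f x) \<partial>count_space UNIV)"
    unfolding jump_mean_def
    by (simp add: nn_integral_sum[symmetric] nn_integral_add[symmetric] del: fun_upd_apply)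
      (intro nn_integral_cong; simp add: sum_distrib_left distrib_left sum.distrib del: fun_upd_apply)
  finally show ?thesis .
qed

lemma hit_mass_0: "hit x0 0 = (\<lambda>y. if y = x0 then 1 else 0)"
  by (simp add: hit_mass_def)

lemma hit_mass_Suc: "hit x0 (Suc k) = jump_step \<beta> \<beta>i G \<eta> \<delta> (hit x0 k)"
  by (simp add: hit_mass_def)

lemma hit_mass_Suc_nonzero:
  assumes "hit x0 (Suc k) y \<noteq> 0"
  shows "\<exists>u. (0 < y u \<and> hit x0 k (y(u := y u - 1)) \<noteq> 0) \<or> hit x0 k (y(u := y u + 1)) \<noteq> 0"
proof -
  from assms obtain u where
    "(if 0 < y u \<and> y(u := y u - 1) \<noteq> (\<lambda>_. 0)
       then hit x0 k (y(u := y u - 1)) * ennreal (birth (y(u := y u - 1)) u / rate (y(u := y u - 1)))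
       else 0)
     + hit x0 k (y(u := y u + 1)) * ennreal (death (y(u := y u + 1)) u / rate (y(u := y u + 1))) \<noteq> 0"
    unfolding hit_mass_Suc jump_step_def by (metis (no_types, lifting) sum.neutral)
  then show ?thesis by (auto split: if_splits)
qed

lemma hit_mass_support: "hit x0 k y \<noteq> 0 \<Longrightarrow> tot y \<le> tot x0 + k"
proof (induction k arbitrary: y)
  case 0
  then show ?case by (simp add: hit_mass_0 split: if_splits)
next
  case (Suc k)
  then obtain u where "(0 < y u \<and> hit x0 k (y(u := y u - 1)) \<noteq> 0) \<or> hit x0 k (y(u := y u + 1)) \<noteq> 0"
    using hit_mass_Suc_nonzero by blast
  then show ?case
    using Suc.IH tot_fun_upd[of y u "y u - 1"] tot_fun_upd[of y u "y u + 1"] by fastforce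
qed

lemma hit_mass_birth:
  assumes "x \<noteq> (\<lambda>_. 0)"
  shows "hit x0 k x * ennreal (birth x u / rate x) \<le> hit x0 (Suc k) (x(u := x u + 1))"
proof -
  let ?y = "x(u := x u + 1)"
  have "?y(u := ?y u - 1) = x" by (simp add: fun_eq_iff)
  then have "hit x0 k x * ennreal (birth x u / rate x) \<le>
     (if 0 < ?y u \<and> ?y(u := ?y u - 1) \<noteq> (\<lambda>_. 0)
       then hit x0 k (?y(u := ?y u - 1)) * ennreal (birth (?y(u := ?y u - 1)) u / rate (?y(u := ?y u - 1)))
       else 0)
      + hit x0 k (?y(u := ?y u + 1)) * ennreal (death (?y(u := ?y u + 1)) u / rate (?y(u := ?y u + 1)))"
    using assms by simp
  also have "\<dots> \<le> hit x0 (Suc k) ?y"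
    unfolding hit_mass_Suc jump_step_def by (rule member_le_sum) auto
  finally show ?thesis .
qed

lemma hit_mass_births_pos:
  assumes "0 < x0 u"
  shows "0 < hit x0 j (x0(u := x0 u + j))"
proof (induction j)
  case 0
  then show ?case by (simp add: hit_mass_0)
next
  case (Suc j)
  let ?z = "x0(u := x0 u + j)"
  have z: "?z \<noteq> (\<lambda>_. 0)" and "0 < ?z u" using assms by (auto simp: fun_eq_iff)
  then have "0 < birth ?z u / rate ?z" using birth_pos rate_pos by simp
  then have "0 < hit x0 j ?z * ennreal (birth ?z u / rate ?z)"
    using Suc.IH by (simp add: ennreal_zero_less_mult_iff del: fun_upd_apply)
  also have "\<dots> \<le> hit x0 (Suc j) (?z(u := ?z u + 1))" by (rule hit_mass_birth[OF z])
  also have "?z(u := ?z u + 1) = x0(u := x0 u + Suc j)" by simp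
  finally show ?case .
qed

lemma hit_mass_reaches_wsize:
  assumes w: "\<And>u. 0 < w u" and x0: "x0 \<noteq> (\<lambda>_. 0)"
  obtains j z where "0 < hit x0 j z" "c < wsize w z"
proof -
  obtain u where u: "0 < x0 u" using x0 by (auto simp: fun_eq_iff)
  obtain j :: nat where "(c - wsize w x0) / w u < real j" using reals_Archimedean2 by blast
  then have "c < wsize w x0 + w u * real j" using w[of u] by (simp add: pos_divide_less_eq algebra_simps)
  then have "c < wsize w (x0(u := x0 u + j))" by (simp add: wsize_fun_upd)
  moreover have "0 < hit x0 j (x0(u := x0 u + j))" using u by (rule hit_mass_births_pos)
  ultimately show thesis using that by blast
qed

subsection \<open>Lyapunov criteria\<close>

definition expected_holding :: "('l \<Rightarrow> nat) \<Rightarrow> nat \<Rightarrow> ennreal" where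
  "expected_holding x0 k =
     (\<integral>\<^sup>+y. (if y = (\<lambda>_. 0) then 0 else hit x0 k y / ennreal (rate y)) \<partial>count_space UNIV)"

lemma exp_hit_time_eq_suminf: "exp_hit_time \<beta> \<beta>i G \<eta> \<delta> x0 = (\<Sum>k. expected_holding x0 k)"
  unfolding exp_hit_time_def expected_holding_def ..

lemma expected_holding_add_le:
  assumes "\<And>y. y \<noteq> (\<lambda>_. 0) \<Longrightarrow> jump_mean V y + 1 / ennreal (rate y) \<le> V y"
  shows "expected_holding x0 k + (\<integral>\<^sup>+y. hit x0 (Suc k) y * V y \<partial>count_space UNIV)
       \<le> (\<integral>\<^sup>+y. (if y = (\<lambda>_. 0) then 0 else hit x0 k y * V y) \<partial>count_space UNIV)"
proof -
  have "expected_holding x0 k + (\<integral>\<^sup>+y. hit x0 (Suc k) y * V y \<partial>count_space UNIV)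
      = (\<integral>\<^sup>+y. (if y = (\<lambda>_. 0) then 0 else hit x0 k y / ennreal (rate y))
          + (if y = (\<lambda>_. 0) then 0 else hit x0 k y * jump_mean V y) \<partial>count_space UNIV)"
    unfolding expected_holding_def hit_mass_Suc nn_integral_jump_step
    by (rule nn_integral_add[symmetric]) auto
  also have "\<dots> \<le> (\<integral>\<^sup>+y. (if y = (\<lambda>_. 0) then 0 else hit x0 k y * V y) \<partial>count_space UNIV)"
    using assms
    by (intro nn_integral_mono)
      (auto simp: divide_ennreal_def distrib_left[symmetric] add.commute intro!: mult_left_mono)
  finally show ?thesis .
qed

lemma exp_hit_time_le_Lyapunov:
  assumes V: "\<And>y. 0 \<le> V y" and drift: "\<And>y. y \<noteq> (\<lambda>_. 0) \<Longrightarrow> generator V y \<le> -1"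
    and x0: "x0 \<noteq> (\<lambda>_. 0)"
  shows "exp_hit_time \<beta> \<beta>i G \<eta> \<delta> x0 \<le> ennreal (V x0)"
proof -
  define R where "R k = (\<integral>\<^sup>+y. (if y = (\<lambda>_. 0) then 0 else hit x0 k y * ennreal (V y)) \<partial>count_space UNIV)"
    for k
  have telescope: "(\<Sum>k<K. expected_holding x0 k) + R K \<le> R 0" for K
  proof (induction K)
    case (Suc K)
    have "R (Suc K) \<le> (\<integral>\<^sup>+y. hit x0 (Suc K) y * ennreal (V y) \<partial>count_space UNIV)"
      unfolding R_def by (intro nn_integral_mono) auto
    then have "expected_holding x0 K + R (Suc K)
        \<le> expected_holding x0 K + (\<integral>\<^sup>+y. hit x0 (Suc K) y * ennreal (V y) \<partial>count_space UNIV)"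
      by (rule add_left_mono)
    also have "\<dots> \<le> R K"
      unfolding R_def using jump_mean_le_of_drift[OF V _ drift] by (rule expected_holding_add_le)
    finally have step: "expected_holding x0 K + R (Suc K) \<le> R K" .
    have "(\<Sum>k<Suc K. expected_holding x0 k) + R (Suc K)
        = (\<Sum>k<K. expected_holding x0 k) + (expected_holding x0 K + R (Suc K))"
      by (simp add: add.assoc)
    also have "\<dots> \<le> (\<Sum>k<K. expected_holding x0 k) + R K"
      using step by (rule add_left_mono)
    also have "\<dots> \<le> R 0" by (rule Suc.IH)
    finally show ?case .
  qed simp
  have "R 0 = (\<integral>\<^sup>+y. ennreal (V x0) * indicator {x0} y \<partial>count_space UNIV)"
    unfolding R_def using x0 by (intro nn_integral_cong) (auto simp: hit_mass_0 indicator_def)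
  also have "\<dots> = ennreal (V x0)" by simp
  finally have "R 0 = ennreal (V x0)" .
  then have "(\<Sum>k<K. expected_holding x0 k) \<le> ennreal (V x0)" for K
    using telescope[of K] by (metis add_increasing2 order_trans zero_le order_refl)
  then show ?thesis
    unfolding exp_hit_time_eq_suminf suminf_eq_SUP by (rule SUP_least)
qed

lemma hit_mass_integral_mono:
  assumes U0: "U (\<lambda>_. 0) = 0" and U: "\<And>x. x \<noteq> (\<lambda>_. 0) \<Longrightarrow> U x \<le> jump_mean U x"
  shows "(\<integral>\<^sup>+y. hit x0 k y * U y \<partial>count_space UNIV) \<le> (\<integral>\<^sup>+y. hit x0 (Suc k) y * U y \<partial>count_space UNIV)"
proof -
  have "(\<integral>\<^sup>+y. hit x0 k y * U y \<partial>count_space UNIV)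
      = (\<integral>\<^sup>+x. (if x = (\<lambda>_. 0) then 0 else hit x0 k x * U x) \<partial>count_space UNIV)"
    using U0 by (intro nn_integral_cong) auto
  also have "\<dots> \<le> (\<integral>\<^sup>+x. (if x = (\<lambda>_. 0) then 0 else hit x0 k x * jump_mean U x) \<partial>count_space UNIV)"
    using U by (intro nn_integral_mono) (auto intro: mult_left_mono)
  also have "\<dots> = (\<integral>\<^sup>+y. hit x0 (Suc k) y * U y \<partial>count_space UNIV)"
    unfolding hit_mass_Suc by (rule nn_integral_jump_step[symmetric])
  finally show ?thesis .
qed

lemma expected_holding_ge:
  assumes U1: "\<And>y. U y \<le> 1" and U0: "U (\<lambda>_. 0) = 0"
    and Q: "0 < Q" "\<And>y. rate y \<le> Q * real (tot y)"
  shows "(\<integral>\<^sup>+y. hit x0 k y * U y \<partial>count_space UNIV) * ennreal (1 / (Q * real (tot x0 + k)))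
       \<le> expected_holding x0 k"
  unfolding expected_holding_def nn_integral_multc[symmetric, OF borel_measurable_count_space]
proof (intro nn_integral_mono)
  fix y :: "'l \<Rightarrow> nat"
  show "hit x0 k y * U y * ennreal (1 / (Q * real (tot x0 + k)))
      \<le> (if y = (\<lambda>_. 0) then 0 else hit x0 k y / ennreal (rate y))"
  proof (cases "y = (\<lambda>_. 0) \<or> hit x0 k y = 0")
    case True
    then show ?thesis using U0 by auto
  next
    case False
    then have q: "0 < rate y" and "tot y \<le> tot x0 + k"
      using rate_pos hit_mass_support by auto
    then have "rate y \<le> Q * real (tot x0 + k)"
      using Q by (smt (verit) mult_left_mono of_nat_mono)
    then have "ennreal (1 / (Q * real (tot x0 + k))) \<le> ennreal (1 / rate y)"
      using q by (intro ennreal_leI) (simp add: frac_le)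
    with mult_left_le[OF U1] have "hit x0 k y * U y * ennreal (1 / (Q * real (tot x0 + k))) \<le> hit x0 k y * ennreal (1 / rate y)"
      by (intro mult_mono) auto
    then show ?thesis
      using False q by (simp add: divide_ennreal_def inverse_ennreal divide_inverse)
  qed
qed

text \<open>
  The mean of U under the k-th hitting mass never decreases and the total rate of a state reached
  after k jumps is O(tot x0 + k), so the k-th expected holding time is at least a constant
  divided by tot x0 + k.
\<close>

lemma exp_hit_time_infinite:
  assumes U: "\<And>y. 0 \<le> U y" "\<And>y. U y \<le> 1" "U (\<lambda>_. 0) = 0"
    and drift: "\<And>y. y \<noteq> (\<lambda>_. 0) \<Longrightarrow> 0 \<le> generator U y"
    and reach: "0 < hit x0 K z" "0 < U z"
  shows "exp_hit_time \<beta> \<beta>i G \<eta> \<delta> x0 = \<infinity>"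
proof -
  define c where "c k = (\<integral>\<^sup>+y. hit x0 k y * ennreal (U y) \<partial>count_space UNIV)" for k
  have c_mono: "c K \<le> c k" if "K \<le> k" for k
    using hit_mass_integral_mono[of "\<lambda>y. ennreal (U y)"] jump_mean_ge_of_drift[OF U(1) _ drift] U(3)
    unfolding c_def by (intro lift_Suc_mono_le[OF _ that]) auto
  have "0 < hit x0 K z * ennreal (U z)" using reach by (simp add: ennreal_zero_less_mult_iff)
  also have "\<dots> \<le> c K" unfolding c_def by (rule nn_integral_ge_point) simp
  finally obtain y where "0 < y" "y < c K" using dense by blast
  then obtain e where e: "0 < e" "ennreal e \<le> c K"
    by (metis less_imp_le less_top_ennreal order_less_le_trans top_greatest ennreal_less_zero_iff)
  obtain Q where Q: "0 < Q" "\<And>y. rate y \<le> Q * real (tot y)"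
    using rate_le_linear by blast
  have "ennreal (e / Q / real (k + tot x0)) \<le> expected_holding x0 k" if "K \<le> k" for k
  proof -
    have "ennreal (e / Q / real (k + tot x0)) = ennreal e * ennreal (1 / (Q * real (tot x0 + k)))"
      using e Q by (simp add: ennreal_mult[symmetric] add.commute)
    also have "\<dots> \<le> c k * ennreal (1 / (Q * real (tot x0 + k)))"
      using e(2) c_mono[OF that] by (intro mult_right_mono) auto
    also have "\<dots> \<le> expected_holding x0 k"
      unfolding c_def using U Q by (intro expected_holding_ge) auto
    finally show ?thesis .
  qed
  then show ?thesis
    unfolding exp_hit_time_eq_suminf using e(1) Q(1)
    by (intro suminf_infinite_if_ge_harmonic[where c = "e / Q" and K = K and m = "tot x0"]) auto
qed

lemma birth_wsize:
  "(\<Sum>u\<in>UNIV. birth x u * w u) = \<beta> (tot x) * (\<Sum>v\<in>UNIV. (\<Sum>u\<in>UNIV. w u * G u v) * real (x v))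
     + \<beta>i (tot x) * \<eta> * wsize w x"
proof -
  have "(\<Sum>u\<in>UNIV. birth x u * w u) = (\<Sum>u\<in>UNIV. \<beta> (tot x) * (\<Sum>v\<in>UNIV. w u * G u v * real (x v))
      + \<beta>i (tot x) * \<eta> * (w u * real (x u)))"
    unfolding birth_rate_def by (intro sum.cong refl) (simp add: algebra_simps sum_distrib_left)
  also have "\<dots> = \<beta> (tot x) * (\<Sum>u\<in>UNIV. \<Sum>v\<in>UNIV. w u * G u v * real (x v)) + \<beta>i (tot x) * \<eta> * wsize w x"
    unfolding wsize_def by (simp add: sum.distrib sum_distrib_left)
  also have "(\<Sum>u\<in>UNIV. \<Sum>v\<in>UNIV. w u * G u v * real (x v))
      = (\<Sum>v\<in>UNIV. (\<Sum>u\<in>UNIV. w u * G u v) * real (x v))"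
    by (subst sum.swap) (simp add: sum_distrib_right)
  finally show ?thesis .
qed

lemma death_wsize: "(\<Sum>u\<in>UNIV. death x u * w u) = \<delta> * wsize w x"
  unfolding death_rate_def wsize_def by (simp add: sum_distrib_left algebra_simps)

lemma birth_wsize_le:
  assumes "\<And>u. 0 \<le> w u" and "\<And>v. (\<Sum>u\<in>UNIV. w u * G u v) \<le> r * w v"
  shows "(\<Sum>u\<in>UNIV. birth x u * w u) \<le> (\<beta> (tot x) * r + \<beta>i (tot x) * \<eta>) * wsize w x"
proof -
  have "(\<Sum>v\<in>UNIV. (\<Sum>u\<in>UNIV. w u * G u v) * real (x v)) \<le> r * wsize w x"
    unfolding wsize_def sum_distrib_left using assms(2)
    by (intro sum_mono) (simp add: mult.assoc[symmetric] mult_right_mono)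
  then show ?thesis
    unfolding birth_wsize using beta_pos[of "tot x"] by (simp add: algebra_simps)
qed

lemma birth_wsize_ge:
  assumes "\<And>u. 0 \<le> w u" and "\<And>v. r * w v \<le> (\<Sum>u\<in>UNIV. w u * G u v)"
  shows "(\<beta> (tot x) * r + \<beta>i (tot x) * \<eta>) * wsize w x \<le> (\<Sum>u\<in>UNIV. birth x u * w u)"
proof -
  have "r * wsize w x \<le> (\<Sum>v\<in>UNIV. (\<Sum>u\<in>UNIV. w u * G u v) * real (x v))"
    unfolding wsize_def sum_distrib_left using assms(2)
    by (intro sum_mono) (simp add: mult.assoc[symmetric] mult_right_mono)
  then show ?thesis
    unfolding birth_wsize using beta_pos[of "tot x"] by (simp add: algebra_simps)
qed

lemma birth_wsize_le_linear:
  assumes "\<And>u. 0 \<le> w u" and "\<And>v. (\<Sum>u\<in>UNIV. w u * G u v) \<le> r * w v" and "0 \<le> r"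
  obtains R where "0 \<le> R" "\<And>x. (\<Sum>u\<in>UNIV. birth x u * w u) \<le> R * wsize w x"
proof -
  obtain B Bi where B: "\<And>n. \<beta> n \<le> B" and Bi: "\<And>n. \<beta>i n \<le> Bi"
    using beta_bdd betai_bdd by blast
  have "0 \<le> B" "0 \<le> Bi"
    using B[of 0] Bi[of 0] beta_pos[of 0] betai_pos[of 0] by linarith+
  have "(\<Sum>u\<in>UNIV. birth x u * w u) \<le> (B * r + Bi * \<eta>) * wsize w x" for x
  proof -
    have "(\<beta> (tot x) * r + \<beta>i (tot x) * \<eta>) * wsize w x \<le> (B * r + Bi * \<eta>) * wsize w x"
      using B Bi assms(1,3) eta_pos wsize_nonneg[of w x]
      by (intro mult_right_mono add_mono) (auto intro: mult_right_mono)
    then show ?thesis using birth_wsize_le[OF assms(1,2)] by (rule order_trans[rotated])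
  qed
  moreover have "0 \<le> B * r + Bi * \<eta>"
    using \<open>0 \<le> B\<close> \<open>0 \<le> Bi\<close> assms(3) eta_pos by simp
  ultimately show thesis using that by blast
qed

lemma generator_wsize:
  "generator (\<lambda>y. \<phi> (wsize w y)) x = (\<Sum>u\<in>UNIV.
      birth x u * (\<phi> (wsize w x + w u) - \<phi> (wsize w x))
    + death x u * (\<phi> (wsize w x - w u) - \<phi> (wsize w x)))"
  unfolding generator_def
proof (intro sum.cong refl)
  fix u
  show "birth x u * (\<phi> (wsize w (x(u := x u + 1))) - \<phi> (wsize w x))
      + death x u * (\<phi> (wsize w (x(u := x u - 1))) - \<phi> (wsize w x))
    = birth x u * (\<phi> (wsize w x + w u) - \<phi> (wsize w x))
      + death x u * (\<phi> (wsize w x - w u) - \<phi> (wsize w x))"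
    using wsize_Suc[of w x u] wsize_diff_1[of x u w] by (cases "x u = 0") (simp_all add: death_rate_def)
qed

lemma generator_wsize_le:
  assumes up: "\<And>u. \<phi> (wsize w x + w u) - \<phi> (wsize w x) \<le> a * w u"
    and down: "\<And>u. 0 < x u \<Longrightarrow> \<phi> (wsize w x - w u) - \<phi> (wsize w x) \<le> - (b * w u)"
  shows "generator (\<lambda>y. \<phi> (wsize w y)) x \<le> a * (\<Sum>u\<in>UNIV. birth x u * w u) - b * (\<delta> * wsize w x)"
proof -
  have "generator (\<lambda>y. \<phi> (wsize w y)) x \<le> (\<Sum>u\<in>UNIV. birth x u * (a * w u) + death x u * (- (b * w u)))"
    unfolding generator_wsize
  proof (intro sum_mono add_mono)
    fix u
    show "birth x u * (\<phi> (wsize w x + w u) - \<phi> (wsize w x)) \<le> birth x u * (a * w u)"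
      using up birth_nonneg by (rule mult_left_mono)
    show "death x u * (\<phi> (wsize w x - w u) - \<phi> (wsize w x)) \<le> death x u * (- (b * w u))"
      using down death_nonneg by (cases "x u = 0") (simp add: death_rate_def, intro mult_left_mono, auto)
  qed
  also have "(\<Sum>u\<in>UNIV. birth x u * (a * w u) + death x u * (- (b * w u)))
      = a * (\<Sum>u\<in>UNIV. birth x u * w u) - b * (\<delta> * wsize w x)"
    unfolding death_wsize[symmetric]
    by (simp add: sum.distrib sum_distrib_left sum_negf sum_subtractf mult.left_commute)
  finally show ?thesis .
qed

lemma generator_wsize_ge:
  assumes up: "\<And>u. a * w u \<le> \<phi> (wsize w x + w u) - \<phi> (wsize w x)"
    and down: "\<And>u. 0 < x u \<Longrightarrow> - (b * w u) \<le> \<phi> (wsize w x - w u) - \<phi> (wsize w x)"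
  shows "a * (\<Sum>u\<in>UNIV. birth x u * w u) - b * (\<delta> * wsize w x) \<le> generator (\<lambda>y. \<phi> (wsize w y)) x"
proof -
  have "(\<Sum>u\<in>UNIV. birth x u * (a * w u) + death x u * (- (b * w u))) \<le> generator (\<lambda>y. \<phi> (wsize w y)) x"
    unfolding generator_wsize
  proof (intro sum_mono add_mono)
    fix u
    show "birth x u * (a * w u) \<le> birth x u * (\<phi> (wsize w x + w u) - \<phi> (wsize w x))"
      using up birth_nonneg by (rule mult_left_mono)
    show "death x u * (- (b * w u)) \<le> death x u * (\<phi> (wsize w x - w u) - \<phi> (wsize w x))"
      using down death_nonneg by (cases "x u = 0") (simp add: death_rate_def, intro mult_left_mono, auto)
  qed
  also have "(\<Sum>u\<in>UNIV. birth x u * (a * w u) + death x u * (- (b * w u)))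
      = a * (\<Sum>u\<in>UNIV. birth x u * w u) - b * (\<delta> * wsize w x)"
    unfolding death_wsize[symmetric]
    by (simp add: sum.distrib sum_distrib_left sum_negf sum_subtractf mult.left_commute)
  finally show ?thesis .
qed

lemma generator_ln_wsize_le:
  assumes w: "\<And>u. 0 \<le> w u"
  shows "generator (\<lambda>y. ln (wsize w y + 1)) x
       \<le> ((\<Sum>u\<in>UNIV. birth x u * w u) - \<delta> * wsize w x) / (wsize w x + 1)"
proof -
  let ?W = "wsize w x"
  have W: "0 \<le> ?W" by (rule wsize_nonneg[OF w])
  have "generator (\<lambda>y. ln (wsize w y + 1)) x
      \<le> 1 / (?W + 1) * (\<Sum>u\<in>UNIV. birth x u * w u) - 1 / (?W + 1) * (\<delta> * ?W)"
  proof (rule generator_wsize_le)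
    fix u
    show "ln (?W + w u + 1) - ln (?W + 1) \<le> 1 / (?W + 1) * w u"
      using ln_diff_le[of "?W + w u + 1" "?W + 1"] W w[of u] by simp
    assume "0 < x u"
    then have "w u * 1 \<le> w u * real (x u)" using w[of u] by (intro mult_left_mono) auto
    then have "w u \<le> ?W" using wsize_ge_component[of w u x] w by simp
    then show "ln (?W - w u + 1) - ln (?W + 1) \<le> - (1 / (?W + 1) * w u)"
      using ln_diff_le[of "?W - w u + 1" "?W + 1"] W w[of u] by simp
  qed
  then show ?thesis by (simp add: diff_divide_distrib)
qed

lemma generator_neg_exp_wsize_le:
  assumes \<kappa>: "0 \<le> \<kappa>" and w: "\<And>u. wmin \<le> w u" "0 \<le> wmin"
  shows "generator (\<lambda>y. - exp (- \<kappa> * wsize w y)) x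
       \<le> \<kappa> * exp (- \<kappa> * wsize w x)
           * ((\<Sum>u\<in>UNIV. birth x u * w u) - (1 + \<kappa> * wmin / 2) * (\<delta> * wsize w x))"
proof -
  define E where "E = exp (- \<kappa> * wsize w x)"
  have E: "0 < E" by (simp add: E_def)
  have "generator (\<lambda>y. - exp (- \<kappa> * wsize w y)) x
      \<le> (\<kappa> * E) * (\<Sum>u\<in>UNIV. birth x u * w u) - (\<kappa> * E * (1 + \<kappa> * wmin / 2)) * (\<delta> * wsize w x)"
  proof (rule generator_wsize_le)
    fix u
    have "0 \<le> w u" using w(1)[of u] w(2) by linarith
    then have t: "0 \<le> \<kappa> * w u" using \<kappa> by simp
    have "1 - exp (- (\<kappa> * w u)) \<le> \<kappa> * w u" using exp_ge_add_one_self[of "- (\<kappa> * w u)"] by simp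
    then have "E * (1 - exp (- (\<kappa> * w u))) \<le> E * (\<kappa> * w u)" using E by simp
    then show "- exp (- \<kappa> * (wsize w x + w u)) - - exp (- \<kappa> * wsize w x) \<le> \<kappa> * E * w u"
      unfolding exp_minus_mult_shift E_def[symmetric] by (simp add: algebra_simps)
    have "\<kappa> * w u * (\<kappa> * wmin) \<le> \<kappa> * w u * (\<kappa> * w u)"
      using t \<kappa> w(1)[of u] by (intro mult_left_mono) auto
    then have "\<kappa> * w u * (1 + \<kappa> * wmin / 2) \<le> exp (\<kappa> * w u) - 1"
      using exp_lower_Taylor_quadratic[OF t] by (simp add: power2_eq_square algebra_simps)
    then have "E * (\<kappa> * w u * (1 + \<kappa> * wmin / 2)) \<le> E * (exp (\<kappa> * w u) - 1)" using E by simp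
    then show "- exp (- \<kappa> * (wsize w x - w u)) - - exp (- \<kappa> * wsize w x)
        \<le> - (\<kappa> * E * (1 + \<kappa> * wmin / 2) * w u)"
      unfolding exp_minus_mult_shift E_def[symmetric] by (simp add: algebra_simps)
  qed
  then show ?thesis unfolding E_def by (simp add: algebra_simps)
qed

lemma generator_neg_exp_wsize_ge:
  assumes \<kappa>: "0 \<le> \<kappa>" and w: "\<And>u. 0 \<le> w u" "\<And>u. w u \<le> 1"
  shows "\<kappa> * exp (- \<kappa> * wsize w x)
           * (exp (- \<kappa>) * (\<Sum>u\<in>UNIV. birth x u * w u) - exp \<kappa> * (\<delta> * wsize w x))
       \<le> generator (\<lambda>y. - exp (- \<kappa> * wsize w y)) x"
proof -
  define E where "E = exp (- \<kappa> * wsize w x)"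
  have E: "0 < E" by (simp add: E_def)
  have "(\<kappa> * E * exp (- \<kappa>)) * (\<Sum>u\<in>UNIV. birth x u * w u) - (\<kappa> * E * exp \<kappa>) * (\<delta> * wsize w x)
      \<le> generator (\<lambda>y. - exp (- \<kappa> * wsize w y)) x"
  proof (rule generator_wsize_ge)
    fix u
    have t: "0 \<le> \<kappa> * w u" "\<kappa> * w u \<le> \<kappa>" using \<kappa> w[of u] by (auto simp: mult_left_le)
    have "\<kappa> * w u * exp (- \<kappa>) \<le> \<kappa> * w u * exp (- (\<kappa> * w u))"
      using t by (intro mult_left_mono) auto
    also have "\<dots> \<le> 1 - exp (- (\<kappa> * w u))" by (rule mult_exp_minus_le[OF t(1)])
    finally have "E * (\<kappa> * w u * exp (- \<kappa>)) \<le> E * (1 - exp (- (\<kappa> * w u)))" using E by simp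
    then show "\<kappa> * E * exp (- \<kappa>) * w u \<le> - exp (- \<kappa> * (wsize w x + w u)) - - exp (- \<kappa> * wsize w x)"
      unfolding exp_minus_mult_shift E_def[symmetric] by (simp add: algebra_simps)
    have "exp (\<kappa> * w u) - 1 \<le> \<kappa> * w u * exp (\<kappa> * w u)" by (rule exp_minus_one_le)
    also have "\<dots> \<le> \<kappa> * w u * exp \<kappa>" using t by (intro mult_left_mono) auto
    finally have "E * (exp (\<kappa> * w u) - 1) \<le> E * (\<kappa> * w u * exp \<kappa>)" using E by simp
    then show "- (\<kappa> * E * exp \<kappa> * w u) \<le> - exp (- \<kappa> * (wsize w x - w u)) - - exp (- \<kappa> * wsize w x)"
      unfolding exp_minus_mult_shift E_def[symmetric] by (simp add: algebra_simps)
  qed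
  then show ?thesis unfolding E_def by (simp add: algebra_simps)
qed

end

section \<open>The subcritical and supercritical regimes\<close>

text \<open>
  Where births dominate deaths by the factor exp (2 \<kappa>), the function -exp (-\<kappa> W) is
  subharmonic; truncating at level c makes it vanish on the region W \<le> c, where this may fail.
\<close>

definition escape_test :: "('l::finite \<Rightarrow> real) \<Rightarrow> real \<Rightarrow> real \<Rightarrow> ('l \<Rightarrow> nat) \<Rightarrow> real" where
  "escape_test w \<kappa> c x = max 0 (exp (- \<kappa> * c) - exp (- \<kappa> * wsize w x))"

lemma escape_test_nonneg: "0 \<le> escape_test w \<kappa> c x"
  by (simp add: escape_test_def)

lemma escape_test_le_1:
  assumes "0 \<le> \<kappa>" "0 \<le> c"
  shows "escape_test w \<kappa> c x \<le> 1"
proof -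
  have "exp (- \<kappa> * c) \<le> 1" using assms by simp
  then show ?thesis
    unfolding escape_test_def using exp_gt_zero[of "- \<kappa> * wsize w x"]
    by (intro max.boundedI) linarith+
qed

lemma escape_test_zero: "0 \<le> \<kappa> \<Longrightarrow> 0 \<le> c \<Longrightarrow> escape_test w \<kappa> c (\<lambda>_. 0) = 0"
  by (simp add: escape_test_def wsize_zero)

text \<open>
  The logarithmic term has drift at most -1 where the births of W are at most (\<delta> - \<epsilon>) W and
  W \<ge> 1; on the remaining bounded region the drift of the concave exponential term is at most
  -A \<kappa> exp (-\<kappa> S) wmin, which A is chosen to make dominant.
\<close>

definition log_Lyapunov :: "('l::finite \<Rightarrow> real) \<Rightarrow> real \<Rightarrow> real \<Rightarrow> real \<Rightarrow> ('l \<Rightarrow> nat) \<Rightarrow> real" where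
  "log_Lyapunov w c A \<kappa> x = c * ln (wsize w x + 1) + A * (1 - exp (- \<kappa> * wsize w x))"

lemma log_Lyapunov_nonneg:
  assumes "\<And>u. 0 \<le> w u" "0 \<le> c" "0 \<le> A" "0 \<le> \<kappa>"
  shows "0 \<le> log_Lyapunov w c A \<kappa> x"
  using assms wsize_nonneg[of w x] unfolding log_Lyapunov_def
  by (intro add_nonneg_nonneg mult_nonneg_nonneg) auto

lemma log_Lyapunov_le_ln:
  assumes w: "\<And>u. 0 \<le> w u" "\<And>u. w u \<le> wmax" and "0 \<le> c" "0 \<le> A" and x: "2 \<le> tot x"
  shows "log_Lyapunov w c A \<kappa> x \<le> (c + (c * ln (wmax + 1) + A) / ln 2) * ln (real (tot x))"
proof -
  define n where "n = real (tot x)"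
  have n: "2 \<le> n" using x by (simp add: n_def)
  have "0 \<le> wmax" using w[of undefined] by (rule order_trans)
  have "wsize w x + 1 \<le> (wmax + 1) * n"
    using wsize_le_tot[of w wmax x] w n by (simp add: n_def algebra_simps)
  then have "ln (wsize w x + 1) \<le> ln ((wmax + 1) * n)"
    using wsize_nonneg[of w x] w by simp
  also have "\<dots> = ln (wmax + 1) + ln n"
    using \<open>0 \<le> wmax\<close> n by (simp add: ln_mult)
  finally have "ln (wsize w x + 1) \<le> ln (wmax + 1) + ln n" .
  moreover have "A * (1 - exp (- \<kappa> * wsize w x)) \<le> A"
    using \<open>0 \<le> A\<close> exp_gt_zero[of "- \<kappa> * wsize w x"] by (simp add: mult_left_le)
  ultimately have "log_Lyapunov w c A \<kappa> x \<le> c * ln n + (c * ln (wmax + 1) + A)"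
    unfolding log_Lyapunov_def using mult_left_mono[of _ _ c] \<open>0 \<le> c\<close>
    by (fastforce simp: algebra_simps)
  also have "\<dots> \<le> c * ln n + (c * ln (wmax + 1) + A) * (ln n / ln 2)"
  proof -
    have "1 \<le> ln n / ln 2" using n by simp
    moreover have "0 \<le> c * ln (wmax + 1) + A" using \<open>0 \<le> wmax\<close> assms by simp
    ultimately show ?thesis using mult_left_mono[of 1 "ln n / ln 2"] by fastforce
  qed
  also have "\<dots> = (c + (c * ln (wmax + 1) + A) / ln 2) * ln n" by (simp add: field_simps)
  finally show ?thesis by (simp add: n_def)
qed

lemma log_drift_far:
  fixes B W \<delta> \<epsilon> c R A \<kappa> E :: real
  assumes B: "B \<le> (\<delta> - \<epsilon>) * W" and W: "1 \<le> W" and \<epsilon>: "0 < \<epsilon>" "c * \<epsilon> = 2"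
    and "0 \<le> R" "0 \<le> A * (\<kappa> * E)"
  shows "c * ((B - \<delta> * W) / (W + 1)) + A * (\<kappa> * E * (B - (\<delta> + R + 1) * W)) \<le> -1"
proof -
  have "0 < c" using \<epsilon> by (intro zero_less_mult_pos2[of c \<epsilon>]) simp_all
  have "(B - \<delta> * W) / (W + 1) \<le> - (\<epsilon> * W) / (W + 1)"
    using B W by (intro divide_right_mono) (auto simp: algebra_simps)
  then have "c * ((B - \<delta> * W) / (W + 1)) \<le> - (2 * W / (W + 1))"
    using mult_left_mono[OF _ less_imp_le[OF \<open>0 < c\<close>]] \<epsilon>(2) by (fastforce simp: mult.assoc[symmetric])
  also have "\<dots> \<le> -1" using W by (simp add: field_simps)
  finally have "c * ((B - \<delta> * W) / (W + 1)) \<le> -1" .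
  moreover have "B - (\<delta> + R + 1) * W \<le> 0"
    using B W \<open>0 \<le> R\<close> \<epsilon>(1) by (smt (verit) mult_right_mono)
  then have "A * (\<kappa> * E * (B - (\<delta> + R + 1) * W)) \<le> 0"
    using \<open>0 \<le> A * (\<kappa> * E)\<close> by (simp add: mult.assoc[symmetric] mult_nonneg_nonpos)
  ultimately show ?thesis by linarith
qed

lemma log_drift_near:
  fixes B W \<delta> c R A \<kappa> E S wmin :: real
  assumes B: "B \<le> R * W" and "0 \<le> R" "0 < \<delta>" "0 < c" "0 < A" "0 < \<kappa>"
    and W: "wmin \<le> W" "0 < wmin" and E: "exp (- \<kappa> * S) \<le> E"
    and A: "A * (\<kappa> * exp (- \<kappa> * S) * wmin) = c * R + 1"
  shows "c * ((B - \<delta> * W) / (W + 1)) + A * (\<kappa> * E * (B - (\<delta> + R + 1) * W)) \<le> -1"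
proof -
  have "0 \<le> W" "0 < E" using W E exp_gt_zero[of "- \<kappa> * S"] by linarith+
  have "B - \<delta> * W \<le> R * (W + 1)"
    using B \<open>0 \<le> W\<close> \<open>0 \<le> R\<close> \<open>0 < \<delta>\<close> by (smt (verit) mult_nonneg_nonneg distrib_left)
  then have "(B - \<delta> * W) / (W + 1) \<le> R" using \<open>0 \<le> W\<close> by (simp add: divide_le_eq)
  then have "c * ((B - \<delta> * W) / (W + 1)) \<le> c * R"
    using \<open>0 < c\<close> by (intro mult_left_mono) auto
  moreover have "exp (- \<kappa> * S) * wmin \<le> E * W"
    using W E \<open>0 < E\<close> by (intro mult_mono) auto
  then have "c * R + 1 \<le> A * (\<kappa> * E * W)"
    unfolding A[symmetric] using \<open>0 < A\<close> \<open>0 < \<kappa>\<close> by (simp add: mult_left_mono mult.assoc)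
  moreover have "0 \<le> W * \<delta>" using \<open>0 \<le> W\<close> \<open>0 < \<delta>\<close> by simp
  then have "B - (\<delta> + R + 1) * W \<le> - W"
    using B by (simp add: algebra_simps)
  then have "A * (\<kappa> * E * (B - (\<delta> + R + 1) * W)) \<le> A * (\<kappa> * E * (- W))"
    using \<open>0 < A\<close> \<open>0 < \<kappa>\<close> \<open>0 < E\<close> by (intro mult_left_mono) auto
  ultimately show ?thesis by linarith
qed

context sis_chain
begin

lemma generator_escape_test_nonneg:
  assumes w: "\<And>u. 0 \<le> w u" "\<And>u. w u \<le> 1" and \<kappa>: "0 \<le> \<kappa>"
    and balance: "\<And>x. c < wsize w x
      \<Longrightarrow> exp \<kappa> * (\<delta> * wsize w x) \<le> exp (- \<kappa>) * (\<Sum>u\<in>UNIV. birth x u * w u)"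
  shows "0 \<le> generator (escape_test w \<kappa> c) x"
proof (cases "escape_test w \<kappa> c x = 0")
  case True
  have "0 = generator (\<lambda>_. 0) x" by (simp add: generator_def)
  also have "\<dots> \<le> generator (escape_test w \<kappa> c) x"
    using True by (intro generator_mono_at) (auto simp: escape_test_def)
  finally show ?thesis .
next
  case False
  have "c < wsize w x"
  proof (rule ccontr)
    assume "\<not> c < wsize w x"
    then have "exp (- \<kappa> * c) \<le> exp (- \<kappa> * wsize w x)" using \<kappa> by (simp add: mult_left_mono)
    then show False using False by (simp add: escape_test_def)
  qed
  have "0 \<le> \<kappa> * exp (- \<kappa> * wsize w x)
      * (exp (- \<kappa>) * (\<Sum>u\<in>UNIV. birth x u * w u) - exp \<kappa> * (\<delta> * wsize w x))"
    using balance[OF \<open>c < wsize w x\<close>] \<kappa> by simp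
  also have "\<dots> \<le> generator (\<lambda>y. - exp (- \<kappa> * wsize w y)) x"
    by (rule generator_neg_exp_wsize_ge[OF \<kappa> w])
  also have "\<dots> = generator (\<lambda>y. exp (- \<kappa> * c) - exp (- \<kappa> * wsize w y)) x"
    using generator_add_const[of "\<lambda>y. - exp (- \<kappa> * wsize w y)" "exp (- \<kappa> * c)"] by simp
  also have "\<dots> \<le> generator (escape_test w \<kappa> c) x"
    using False by (intro generator_mono_at) (auto simp: escape_test_def)
  finally show ?thesis .
qed

lemma exp_hit_time_infinite_supercritical:
  assumes w: "\<And>u. 0 < w u" "\<And>u. w u \<le> 1" and w_super: "\<And>v. r * w v \<le> (\<Sum>u\<in>UNIV. w u * G u v)"
    and rate_lim: "(\<lambda>n. \<beta> n * r + \<beta>i n * \<eta>) \<longlonglongrightarrow> L" and "\<delta> < L"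
    and x0: "x0 \<noteq> (\<lambda>_. 0)"
  shows "exp_hit_time \<beta> \<beta>i G \<eta> \<delta> x0 = \<infinity>"
proof -
  have w0: "0 \<le> w u" for u using w(1)[of u] by simp
  define \<epsilon> where "\<epsilon> = (L - \<delta>) / 2"
  have "0 < \<epsilon>" using \<open>\<delta> < L\<close> by (simp add: \<epsilon>_def)
  obtain N where N: "\<And>n. N \<le> n \<Longrightarrow> \<delta> + \<epsilon> \<le> \<beta> n * r + \<beta>i n * \<eta>"
    using LIMSEQ_ge_midpoint[OF rate_lim \<open>\<delta> < L\<close>] unfolding \<epsilon>_def by metis
  define \<kappa> where "\<kappa> = ln ((\<delta> + \<epsilon>) / \<delta>) / 2"
  have \<kappa>: "0 < \<kappa>" using \<open>0 < \<epsilon>\<close> delta_pos by (simp add: \<kappa>_def)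
  have \<kappa>_balance: "exp \<kappa> * \<delta> = exp (- \<kappa>) * (\<delta> + \<epsilon>)"
    using \<open>0 < \<epsilon>\<close> delta_pos by (simp add: \<kappa>_def exp_minus field_simps flip: exp_add)
  have balance: "exp \<kappa> * (\<delta> * wsize w x) \<le> exp (- \<kappa>) * (\<Sum>u\<in>UNIV. birth x u * w u)"
    if "real N < wsize w x" for x
  proof -
    have "real N < real (tot x)" using that wsize_le_tot[of w 1 x] w(2) by simp
    then have "(\<delta> + \<epsilon>) * wsize w x \<le> (\<beta> (tot x) * r + \<beta>i (tot x) * \<eta>) * wsize w x"
      using N[of "tot x"] wsize_nonneg[of w x] w0 by (intro mult_right_mono) auto
    also have "\<dots> \<le> (\<Sum>u\<in>UNIV. birth x u * w u)" by (rule birth_wsize_ge[OF w0 w_super])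
    finally show ?thesis using \<kappa>_balance by (simp add: mult.assoc[symmetric] mult_left_mono)
  qed
  obtain j z where "0 < hit x0 j z" "real N < wsize w z"
    using hit_mass_reaches_wsize[where w = w and c = "real N", OF w(1) x0] by metis
  moreover from \<open>real N < wsize w z\<close> have "0 < escape_test w \<kappa> (real N) z"
    using \<kappa> by (simp add: escape_test_def)
  moreover have "0 \<le> generator (escape_test w \<kappa> (real N)) y" for y
    using balance \<kappa> by (intro generator_escape_test_nonneg[OF w0 w(2)]) auto
  ultimately show ?thesis
    using escape_test_nonneg escape_test_le_1[of \<kappa> "real N"] escape_test_zero[of \<kappa> "real N" w] \<kappa>
    by (intro exp_hit_time_infinite[where U = "escape_test w \<kappa> (real N)" and K = j and z = z]) auto
qed

lemma generator_log_Lyapunov_le: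
  assumes w: "\<And>u. wmin \<le> w u" "0 \<le> wmin" and "0 \<le> \<kappa>" "0 \<le> c" "0 \<le> A"
  shows "generator (log_Lyapunov w c A \<kappa>) x
       \<le> c * (((\<Sum>u\<in>UNIV. birth x u * w u) - \<delta> * wsize w x) / (wsize w x + 1))
         + A * (\<kappa> * exp (- \<kappa> * wsize w x)
             * ((\<Sum>u\<in>UNIV. birth x u * w u) - (1 + \<kappa> * wmin / 2) * (\<delta> * wsize w x)))"
proof -
  have w0: "0 \<le> w u" for u using w(1)[of u] w(2) by linarith
  have "log_Lyapunov w c A \<kappa> = (\<lambda>y. c * ln (wsize w y + 1) + A * - exp (- \<kappa> * wsize w y) + A)"
    by (auto simp: log_Lyapunov_def fun_eq_iff algebra_simps)
  then have "generator (log_Lyapunov w c A \<kappa>) x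
      = generator (\<lambda>y. c * ln (wsize w y + 1) + A * - exp (- \<kappa> * wsize w y) + A) x"
    by (simp only:)
  also have "\<dots> = c * generator (\<lambda>y. ln (wsize w y + 1)) x + A * generator (\<lambda>y. - exp (- \<kappa> * wsize w y)) x"
    by (rule generator_lincomb)
  finally have "generator (log_Lyapunov w c A \<kappa>) x
      = c * generator (\<lambda>y. ln (wsize w y + 1)) x + A * generator (\<lambda>y. - exp (- \<kappa> * wsize w y)) x" .
  then show ?thesis
    using mult_left_mono[OF generator_ln_wsize_le[where w = w and x = x, OF w0] \<open>0 \<le> c\<close>]
      mult_left_mono[OF generator_neg_exp_wsize_le[where w = w and x = x, OF \<open>0 \<le> \<kappa>\<close> w] \<open>0 \<le> A\<close>]
    by linarith
qed

lemma log_Lyapunov_drift: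
  assumes w: "\<And>u. wmin \<le> w u" "0 < wmin"
    and R: "0 \<le> R" "\<And>x. (\<Sum>u\<in>UNIV. birth x u * w u) \<le> R * wsize w x"
    and \<epsilon>: "0 < \<epsilon>" "\<And>x. N \<le> tot x \<Longrightarrow> (\<Sum>u\<in>UNIV. birth x u * w u) \<le> (\<delta> - \<epsilon>) * wsize w x"
    and S: "1 \<le> S" "\<And>x. tot x < N \<Longrightarrow> wsize w x \<le> S"
    and c: "c * \<epsilon> = 2" and \<kappa>: "\<kappa> * (\<delta> * wmin) = 2 * (R + 1)"
    and A: "A * (\<kappa> * exp (- \<kappa> * S) * wmin) = c * R + 1"
    and x: "x \<noteq> (\<lambda>_. 0)"
  shows "generator (log_Lyapunov w c A \<kappa>) x \<le> -1"
proof -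
  define W where "W = wsize w x"
  define B where "B = (\<Sum>u\<in>UNIV. birth x u * w u)"
  define E where "E = exp (- \<kappa> * W)"
  have "0 < c" using c \<epsilon>(1) by (intro zero_less_mult_pos2[of c \<epsilon>]) simp_all
  have "0 < \<kappa>" using \<kappa> R(1) delta_pos w(2) by (intro zero_less_mult_pos2[of \<kappa> "\<delta> * wmin"]) simp_all
  have "0 < A"
    using A \<open>0 < c\<close> R(1) \<open>0 < \<kappa>\<close> w(2)
    by (intro zero_less_mult_pos2[of A "\<kappa> * exp (- \<kappa> * S) * wmin"]) (simp_all add: add_nonneg_pos)
  have "(1 + \<kappa> * wmin / 2) * \<delta> = \<delta> + R + 1" using \<kappa> by (simp add: algebra_simps)
  then have \<theta>: "(1 + \<kappa> * wmin / 2) * (\<delta> * W) = (\<delta> + R + 1) * W" by (metis mult.assoc)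
  have "generator (log_Lyapunov w c A \<kappa>) x
      \<le> c * ((B - \<delta> * W) / (W + 1)) + A * (\<kappa> * E * (B - (\<delta> + R + 1) * W))"
    using generator_log_Lyapunov_le[where w = w and wmin = wmin and \<kappa> = \<kappa> and c = c and A = A and x = x,
        OF w(1) less_imp_le[OF w(2)]] \<open>0 < c\<close> \<open>0 < \<kappa>\<close> \<open>0 < A\<close>
    unfolding W_def[symmetric] B_def[symmetric] E_def[symmetric] \<theta> by (simp add: mult.assoc)
  also have "\<dots> \<le> -1"
  proof (cases "N \<le> tot x \<and> 1 \<le> W")
    case True
    then show ?thesis
      using \<epsilon> c R(1) \<open>0 < A\<close> \<open>0 < \<kappa>\<close> unfolding B_def W_def E_def
      by (intro log_drift_far) auto
  next
    case False
    then have "W \<le> S" using S unfolding W_def by (cases "N \<le> tot x") auto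
    then show ?thesis
      using R delta_pos \<open>0 < c\<close> \<open>0 < A\<close> \<open>0 < \<kappa>\<close> A wsize_ge_min[OF w(1) less_imp_le[OF w(2)] x]
      unfolding B_def W_def E_def by (intro log_drift_near[where S = S and wmin = wmin]) (auto simp: w(2))
  qed
  finally show ?thesis .
qed

lemma exp_hit_time_le_log_of_drift:
  assumes w: "\<And>u. 0 \<le> w u" "\<And>u. w u \<le> wmax" and "0 < c" "0 \<le> A" "0 \<le> \<kappa>"
    and drift: "\<And>x. x \<noteq> (\<lambda>_. 0) \<Longrightarrow> generator (log_Lyapunov w c A \<kappa>) x \<le> -1"
  shows "\<exists>C>0. \<forall>x. 2 \<le> tot x \<longrightarrow> exp_hit_time \<beta> \<beta>i G \<eta> \<delta> x \<le> ennreal (C * ln (real (tot x)))"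
proof -
  define C where "C = c + (c * ln (wmax + 1) + A) / ln 2"
  have "0 \<le> wmax" using w(1)[of undefined] w(2)[of undefined] by linarith
  then have "0 \<le> (c * ln (wmax + 1) + A) / ln 2" using \<open>0 < c\<close> \<open>0 \<le> A\<close> by simp
  then have "0 < C" using \<open>0 < c\<close> by (simp add: C_def)
  moreover have "exp_hit_time \<beta> \<beta>i G \<eta> \<delta> x \<le> ennreal (C * ln (real (tot x)))" if "2 \<le> tot x" for x
  proof -
    have "x \<noteq> (\<lambda>_. 0)" using that tot_eq_0_iff[of x] by auto
    then have "exp_hit_time \<beta> \<beta>i G \<eta> \<delta> x \<le> ennreal (log_Lyapunov w c A \<kappa> x)"
      using log_Lyapunov_nonneg[where w = w, OF w(1)] \<open>0 < c\<close> \<open>0 \<le> A\<close> \<open>0 \<le> \<kappa>\<close> drift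
      by (intro exp_hit_time_le_Lyapunov) auto
    also have "\<dots> \<le> ennreal (C * ln (real (tot x)))"
      unfolding C_def using log_Lyapunov_le_ln[where w = w, OF w] \<open>0 < c\<close> \<open>0 \<le> A\<close> that
      by (intro ennreal_leI) auto
    finally show ?thesis .
  qed
  ultimately show ?thesis by blast
qed

lemma exp_hit_time_le_log_subcritical:
  assumes w: "\<And>u. 0 < w u" and w_sub: "\<And>v. (\<Sum>u\<in>UNIV. w u * G u v) \<le> r * w v" and r: "0 \<le> r"
    and rate_lim: "(\<lambda>n. \<beta> n * r + \<beta>i n * \<eta>) \<longlonglongrightarrow> L" and "L < \<delta>"
  shows "\<exists>C>0. \<forall>x. 2 \<le> tot x \<longrightarrow> exp_hit_time \<beta> \<beta>i G \<eta> \<delta> x \<le> ennreal (C * ln (real (tot x)))"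
proof -
  have w0: "0 \<le> w u" for u using w[of u] by simp
  define \<epsilon> where "\<epsilon> = (\<delta> - L) / 2"
  have "0 < \<epsilon>" using \<open>L < \<delta>\<close> by (simp add: \<epsilon>_def)
  obtain N where N: "\<And>n. N \<le> n \<Longrightarrow> \<beta> n * r + \<beta>i n * \<eta> \<le> \<delta> - \<epsilon>"
    using LIMSEQ_le_midpoint[OF rate_lim \<open>L < \<delta>\<close>] unfolding \<epsilon>_def by metis
  obtain R where R: "0 \<le> R" "\<And>x. (\<Sum>u\<in>UNIV. birth x u * w u) \<le> R * wsize w x"
    using birth_wsize_le_linear[where w = w, OF w0 w_sub r] by blast
  define wmin where "wmin = Min (range w)"
  define wmax where "wmax = Max (range w)"
  have wmin: "wmin \<le> w u" "0 < wmin" for u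
    unfolding wmin_def using w by (auto intro: Min_le simp: Min_gr_iff)
  have wmax: "w u \<le> wmax" for u unfolding wmax_def by (rule Max_ge) auto
  have "0 \<le> wmax" using w0 wmax by (meson order_trans)
  define S where "S = max (wmax * real N) 1"
  define c where "c = 2 / \<epsilon>"
  define \<kappa> where "\<kappa> = 2 * (R + 1) / (\<delta> * wmin)"
  define A where "A = (c * R + 1) / (\<kappa> * exp (- \<kappa> * S) * wmin)"
  have "0 < \<kappa>" using R(1) delta_pos wmin by (simp add: \<kappa>_def)
  have "0 < c" using \<open>0 < \<epsilon>\<close> by (simp add: c_def)
  have "0 < A" using \<open>0 < c\<close> \<open>0 < \<kappa>\<close> R(1) wmin by (simp add: A_def add_nonneg_pos)
  have "generator (log_Lyapunov w c A \<kappa>) x \<le> -1" if "x \<noteq> (\<lambda>_. 0)" for x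
  proof (rule log_Lyapunov_drift[OF wmin R \<open>0 < \<epsilon>\<close>])
    show "(\<Sum>u\<in>UNIV. birth y u * w u) \<le> (\<delta> - \<epsilon>) * wsize w y" if "N \<le> tot y" for y
      using birth_wsize_le[where x = y, OF w0 w_sub] N[OF that] wsize_nonneg[of w y] w0
      by (smt (verit) mult_right_mono)
    show "wsize w y \<le> S" if "tot y < N" for y
    proof -
      have "wsize w y \<le> wmax * real (tot y)" using wmax by (rule wsize_le_tot)
      also have "\<dots> \<le> wmax * real N"
        using that \<open>0 \<le> wmax\<close> by (intro mult_left_mono) auto
      finally show ?thesis by (simp add: S_def)
    qed
    show "c * \<epsilon> = 2" using \<open>0 < \<epsilon>\<close> by (simp add: c_def)
    show "\<kappa> * (\<delta> * wmin) = 2 * (R + 1)" using delta_pos wmin by (simp add: \<kappa>_def)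
    show "A * (\<kappa> * exp (- \<kappa> * S) * wmin) = c * R + 1"
      using \<open>0 < \<kappa>\<close> wmin by (simp add: A_def)
  qed (use that S_def in auto)
  then show ?thesis
    using \<open>0 < c\<close> \<open>0 < A\<close> \<open>0 < \<kappa>\<close>
    by (intro exp_hit_time_le_log_of_drift[where w = w and wmax = wmax and c = c and A = A and \<kappa> = \<kappa>,
        OF w0 wmax]) auto
qed

end

lemma exists_gt_affine_less:
  fixes a b \<rho> \<delta> :: real
  assumes "a * \<rho> + b < \<delta>"
  shows "\<exists>r>\<rho>. a * r + b < \<delta>"
proof -
  define g where "g = \<delta> - (a * \<rho> + b)"
  define t where "t = g / (2 * (\<bar>a\<bar> + 1))"
  have "0 < g" using assms by (simp add: g_def)
  have "0 < \<bar>a\<bar> + 1" by simp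
  have "a * g \<le> (\<bar>a\<bar> + 1) * g" using \<open>0 < g\<close> by (intro mult_right_mono) auto
  then have "a * t \<le> g / 2"
    using \<open>0 < \<bar>a\<bar> + 1\<close> by (simp add: t_def field_simps)
  moreover have "a * (\<rho> + t) + b = a * \<rho> + b + a * t" by (simp add: algebra_simps)
  ultimately have "a * (\<rho> + t) + b < \<delta>"
    using \<open>0 < g\<close> unfolding g_def by argo
  moreover have "\<rho> < \<rho> + t"
    using \<open>0 < g\<close> \<open>0 < \<bar>a\<bar> + 1\<close> by (simp add: t_def)
  ultimately show ?thesis by blast
qed

lemma exists_less_affine_gt:
  fixes a b \<rho> \<delta> :: real
  assumes "\<delta> < a * \<rho> + b"
  shows "\<exists>r<\<rho>. \<delta> < a * r + b"
proof -
  obtain s where "- \<rho> < s" "a * s + - b < - \<delta>"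
    using exists_gt_affine_less[of a "- \<rho>" "- b" "- \<delta>"] assms by auto
  then show ?thesis by (intro exI[of _ "- s"]) auto
qed

theorem corollary1:
  fixes G :: "'l::finite \<Rightarrow> 'l \<Rightarrow> real"
    and \<eta> \<delta> \<beta>inf \<beta>iinf :: real
    and \<beta> \<beta>i :: "nat \<Rightarrow> real"
  assumes G_nonneg: "\<forall>u v. 0 \<le> G u v"
    and G_sc: "strongly_connected G"
    and eta_pos: "\<eta> > 0"
    and beta_pos: "\<forall>n. \<beta> n > 0"
    and betai_pos: "\<forall>n. \<beta>i n > 0"
    and beta_bdd: "\<exists>B. \<forall>n. \<beta> n \<le> B"
    and betai_bdd: "\<exists>B. \<forall>n. \<beta>i n \<le> B"
    and beta_lim: "\<beta> \<longlonglongrightarrow> \<beta>inf"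
    and betai_lim: "\<beta>i \<longlonglongrightarrow> \<beta>iinf"
    and delta_pos: "\<delta> > 0"
  shows "(\<beta>inf * spec_rad G + \<beta>iinf * \<eta> < \<delta> \<longrightarrow>
            (\<exists>C > 0. \<forall>x :: 'l \<Rightarrow> nat. tot x \<ge> 2 \<longrightarrow>
               exp_hit_time \<beta> \<beta>i G \<eta> \<delta> x \<le> ennreal (C * ln (real (tot x)))))
       \<and> (\<beta>inf * spec_rad G + \<beta>iinf * \<eta> > \<delta> \<longrightarrow>
            (\<forall>x :: 'l \<Rightarrow> nat. x \<noteq> (\<lambda>_. 0) \<longrightarrow> exp_hit_time \<beta> \<beta>i G \<eta> \<delta> x = \<infinity>))"
proof -
  interpret sis_chain \<beta> \<beta>i G \<eta> \<delta>
    using assms by unfold_locales auto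
  have rate_lim: "(\<lambda>n. \<beta> n * r + \<beta>i n * \<eta>) \<longlonglongrightarrow> \<beta>inf * r + \<beta>iinf * \<eta>" for r
    using beta_lim betai_lim by (intro tendsto_intros)
  show ?thesis
  proof (intro conjI impI allI)
    assume "\<beta>inf * spec_rad G + \<beta>iinf * \<eta> < \<delta>"
    then obtain r where r: "spec_rad G < r" "\<beta>inf * r + \<beta>iinf * \<eta> < \<delta>"
      using exists_gt_affine_less by blast
    then obtain w where "\<forall>u. 0 < w u" "\<forall>v. (\<Sum>u\<in>UNIV. w u * G u v) \<le> r * w v"
      using subinvariant_weight_above_spec_rad G_nonneg by blast
    then show "\<exists>C>0. \<forall>x. 2 \<le> tot x \<longrightarrow> exp_hit_time \<beta> \<beta>i G \<eta> \<delta> x \<le> ennreal (C * ln (real (tot x)))"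
      using r spec_rad_nonneg[of G] rate_lim[of r]
      by (intro exp_hit_time_le_log_subcritical[where w = w and L = "\<beta>inf * r + \<beta>iinf * \<eta>"]) auto
  next
    fix x :: "'l \<Rightarrow> nat"
    assume "\<delta> < \<beta>inf * spec_rad G + \<beta>iinf * \<eta>" and "x \<noteq> (\<lambda>_. 0)"
    then obtain r where r: "r < spec_rad G" "\<delta> < \<beta>inf * r + \<beta>iinf * \<eta>"
      using exists_less_affine_gt by blast
    then obtain w where "\<forall>u. 0 < w u \<and> w u \<le> 1" "\<forall>v. r * w v \<le> (\<Sum>u\<in>UNIV. w u * G u v)"
      using superinvariant_weight_below_spec_rad G_nonneg G_sc by blast
    then show "exp_hit_time \<beta> \<beta>i G \<eta> \<delta> x = \<infinity>"
      using r rate_lim[of r] \<open>x \<noteq> (\<lambda>_. 0)\<close>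
      by (intro exp_hit_time_infinite_supercritical[where w = w and L = "\<beta>inf * r + \<beta>iinf * \<eta>"]) auto
  qed
qed

end
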